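(* Let $\mathbf{A}\in\mathbb{R}^{n\times d}$, $\mathbf{B}\in\mathbb{R}^{n\times d_B}$, $\mathbf{C}\in\mathbb{R}^{n_C\times d}$, let $\mathbf{Y}=\mathrm{diag}(y_1,\dots,y_{d_B})$, $\mathbf{Z}=\mathrm{diag}(z_1,\dots,z_{n_C})$ with variables $y_i,z_j$, and let $k,r$ be integers with $0\le k\le\mathrm{rank}(\mathbf{B})$, $0\le r\le\mathrm{rank}(\mathbf{C})$. For any $S\subset[d_B]$ of size $k$ and $R\subset[n_C]$ of size $r$, $$\det[\mathbf{C}_{R,:}(\mathbf{C}_{R,:})^{\rm T}]\det[(\mathbf{B}_{:,S})^{\rm T}\mathbf{B}_{:,S}]\,p_{S,R}(xw;\mathbf{A},\mathbf{B},\mathbf{C})=(-1)^{k+r}x^r w^{d+k-n}\,\partial_{\mathbf{Y}^{S^C}}\partial_{\mathbf{Z}^{R^C}}H(x,w,\mathbf{Y},\mathbf{Z};\mathbf{A},\mathbf{B},\mathbf{C})\Big|_{y_i=0\,\forall i,\ z_j=0\,\forall j},$$ where $\partial_{\mathbf{Y}^{S^C}}=\prod_{i\in[d_B]\setminus S}\partial_{y_i}$ and $\partial_{\mathbf{Z}^{R^C}}=\prod_{j\in[n_C]\setminus R}\partial_{z_j}$.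
   Context: Notation: $\mathbf{M}_{R,S}$, $\mathbf{M}_{:,S}$, $\mathbf{M}_{R,:}$ are submatrices; $\mathbf{M}^\dagger$ Moore–Penrose pseudoinverse with $\mathbf{M}_{R,S}^\dagger:=(\mathbf{M}_{R,S})^\dagger$; empty determinants are $1$ and $\mathbf{M}_{:,\emptyset}\mathbf{M}_{:,\emptyset}^\dagger$, $\mathbf{M}_{\emptyset,:}^\dagger\mathbf{M}_{\emptyset,:}$ are zero. $\mathbf{Q}_S=\mathbf{I}_n-\mathbf{B}_{:,S}\mathbf{B}_{:,S}^\dagger$, $\mathbf{P}_R=\mathbf{I}_d-\mathbf{C}_{R,:}^\dagger\mathbf{C}_{R,:}$, $p_{S,R}(x;\mathbf{A},\mathbf{B},\mathbf{C})=\det[x\mathbf{I}_d-(\mathbf{Q}_S\mathbf{A}\mathbf{P}_R)^{\rm T}(\mathbf{Q}_S\mathbf{A}\mathbf{P}_R)]$. Define $$H(x,w,\mathbf{Y},\mathbf{Z};\mathbf{A},\mathbf{B},\mathbf{C})=\det\begin{pmatrix} w\mathbf{I}_n&\mathbf{0}&\mathbf{B}&\mathbf{A}\\ \mathbf{0}&\mathbf{Z}&\mathbf{0}&\mathbf{C}\\ \mathbf{B}^{\rm T}&\mathbf{0}&\mathbf{Y}&\mathbf{0}\\ \mathbf{A}^{\rm T}&\mathbf{C}^{\rm T}&\mathbf{0}&x\mathbf{I}_d\end{pmatrix}.$$ *)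

theory Defs
  imports "HOL-Analysis.Analysis" "Jordan_Normal_Form.DL_Rank" "Jordan_Normal_Form.DL_Submatrix"
begin

definition pinv :: "real mat \<Rightarrow> real mat" where
  "pinv M = (THE X. X \<in> carrier_mat (dim_col M) (dim_row M) \<and>
                    M * X * M = M \<and> X * M * X = X \<and>
                    transpose_mat (M * X) = M * X \<and> transpose_mat (X * M) = X * M)"

definition cols_sub :: "real mat \<Rightarrow> nat set \<Rightarrow> real mat" where
  "cols_sub M S = submatrix M {0..<dim_row M} S"

definition rows_sub :: "real mat \<Rightarrow> nat set \<Rightarrow> real mat" where
  "rows_sub M R = submatrix M R {0..<dim_col M}"

definition Qmat :: "real mat \<Rightarrow> nat set \<Rightarrow> real mat" where
  "Qmat B S = 1\<^sub>m (dim_row B) - cols_sub B S * pinv (cols_sub B S)"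

definition Pmat :: "real mat \<Rightarrow> nat set \<Rightarrow> real mat" where
  "Pmat C R = 1\<^sub>m (dim_col C) - pinv (rows_sub C R) * rows_sub C R"

definition pSR :: "nat set \<Rightarrow> nat set \<Rightarrow> real \<Rightarrow> real mat \<Rightarrow> real mat \<Rightarrow> real mat \<Rightarrow> real" where
  "pSR S R x A B C =
     (let M = Qmat B S * A * Pmat C R
      in det (x \<cdot>\<^sub>m 1\<^sub>m (dim_col A) - transpose_mat M * M))"

definition Hdet :: "real \<Rightarrow> real \<Rightarrow> (nat \<Rightarrow> real) \<Rightarrow> (nat \<Rightarrow> real) \<Rightarrow>
                    real mat \<Rightarrow> real mat \<Rightarrow> real mat \<Rightarrow> real" where
  "Hdet x w y z A B C =
     (let n = dim_row A; d = dim_col A; dB = dim_col B; nC = dim_row C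
      in det (four_block_mat
               (four_block_mat (w \<cdot>\<^sub>m 1\<^sub>m n) (0\<^sub>m n nC) (0\<^sub>m nC n) (mat_diag nC z))
               (four_block_mat B A (0\<^sub>m nC dB) C)
               (four_block_mat (transpose_mat B) (0\<^sub>m dB nC) (transpose_mat A) (transpose_mat C))
               (four_block_mat (mat_diag dB y) (0\<^sub>m dB d) (0\<^sub>m d dB) (x \<cdot>\<^sub>m 1\<^sub>m d))))"

definition partial :: "'v \<Rightarrow> (('v \<Rightarrow> real) \<Rightarrow> real) \<Rightarrow> ('v \<Rightarrow> real) \<Rightarrow> real" where
  "partial i f p = deriv (\<lambda>t. f (p(i := t))) (p i)"

fun pderivs :: "'v list \<Rightarrow> (('v \<Rightarrow> real) \<Rightarrow> real) \<Rightarrow> ('v \<Rightarrow> real) \<Rightarrow> real" where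
  "pderivs [] f = f"
| "pderivs (i # is) f = partial i (pderivs is f)"

definition Hvar :: "real \<Rightarrow> real \<Rightarrow> real mat \<Rightarrow> real mat \<Rightarrow> real mat \<Rightarrow> (nat + nat \<Rightarrow> real) \<Rightarrow> real" where
  "Hvar x w A B C v = Hdet x w (\<lambda>i. v (Inl i)) (\<lambda>j. v (Inr j)) A B C"

end

theory Submission
  imports Defs
begin

(* H is affine in each diagonal variable y_i, z_j with the principal cofactor as slope, so the
   mixed derivative at Y = Z = 0 is the principal minor of H(x,w,0,0) that keeps the index blocks
   [n], S, R and [d].  Two eliminations evaluate this minor.  The Schur complement of the saddle
   block [w I, B_S; B_S^T, 0] contributes w^(n-k) (-1)^k det(B_S^T B_S) and leaves the bordered
   matrix [0, C_R; C_R^T, x I - A^T Q_S A / w].  Row and column operations with the projector P_R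
   onto ker C_R show that det(C_R C_R^T) p_{S,R}(xw) is (-x)^r w^d times the determinant of this
   bordered matrix, because Q_S and P_R are symmetric idempotents. *)

section \<open>Derivatives of a determinant in its diagonal entries\<close>

definition unit_rows_cols :: "'a :: zero_neq_one mat \<Rightarrow> nat set \<Rightarrow> 'a mat" where
  "unit_rows_cols M U = mat (dim_row M) (dim_col M)
     (\<lambda>(i,j). if i \<in> U \<or> j \<in> U then (if i = j then 1 else 0) else M $$ (i,j))"

definition update_diag :: "'a mat \<Rightarrow> nat \<Rightarrow> 'a \<Rightarrow> 'a mat" where
  "update_diag M i t = mat (dim_row M) (dim_col M) (\<lambda>(a,b). if a = i \<and> b = i then t else M $$ (a,b))"

lemma unit_rows_cols_index:
  "i < dim_row M \<Longrightarrow> j < dim_col M \<Longrightarrow>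
   unit_rows_cols M U $$ (i,j) = (if i \<in> U \<or> j \<in> U then (if i = j then 1 else 0) else M $$ (i,j))"
  unfolding unit_rows_cols_def by simp

lemma unit_rows_cols_carrier [simp]: "M \<in> carrier_mat m m \<Longrightarrow> unit_rows_cols M U \<in> carrier_mat m m"
  unfolding unit_rows_cols_def by auto

lemma update_diag_carrier [simp]: "M \<in> carrier_mat m m \<Longrightarrow> update_diag M i t \<in> carrier_mat m m"
  unfolding update_diag_def by auto

lemma unit_rows_cols_empty [simp]: "unit_rows_cols M {} = M"
  unfolding unit_rows_cols_def by (rule eq_matI) auto

lemma unit_rows_cols_unit_rows_cols: "unit_rows_cols (unit_rows_cols M U) W = unit_rows_cols M (U \<union> W)"
  unfolding unit_rows_cols_def by (rule eq_matI) auto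

lemma unit_rows_cols_update_diag:
  "i \<notin> U \<Longrightarrow> unit_rows_cols (update_diag M i t) U = update_diag (unit_rows_cols M U) i t"
  unfolding unit_rows_cols_def update_diag_def by (rule eq_matI) auto

lemma mat_delete_update_diag: "mat_delete (update_diag M i t) i j = mat_delete M i j"
  unfolding mat_delete_def update_diag_def by (rule eq_matI) auto

lemma mat_delete_unit_rows_cols: "mat_delete (unit_rows_cols M {i}) i i = mat_delete M i i"
  unfolding mat_delete_def unit_rows_cols_def by (rule eq_matI) auto

lemma det_update_diag:
  fixes M :: "'a :: comm_ring_1 mat"
  assumes M: "M \<in> carrier_mat m m" and i: "i < m"
  shows "det (update_diag M i t) = det (update_diag M i 0) + t * det (unit_rows_cols M {i})"
proof -
  have expand: "det (update_diag M i s) =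
      (\<Sum>j<m. (if j = i then 0 else M $$ (i,j)) * cofactor M i j) + s * cofactor M i i" for s
  proof -
    have "det (update_diag M i s) = (\<Sum>j<m. update_diag M i s $$ (i,j) * cofactor M i j)"
      using laplace_expansion_row[OF update_diag_carrier[OF M] i]
      by (simp add: cofactor_def mat_delete_update_diag)
    also have "\<dots> = (\<Sum>j<m. (if j = i then 0 else M $$ (i,j)) * cofactor M i j
                            + (if j = i then s * cofactor M i i else 0))"
      using M i by (intro sum.cong) (auto simp: update_diag_def)
    finally show ?thesis using i by (simp add: sum.distrib)
  qed
  have "det (unit_rows_cols M {i})
      = (\<Sum>j<m. unit_rows_cols M {i} $$ (i,j) * cofactor (unit_rows_cols M {i}) i j)"
    by (rule laplace_expansion_row[OF unit_rows_cols_carrier[OF M] i])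
  also have "\<dots> = (\<Sum>j<m. if j = i then cofactor M i i else 0)"
    using M i by (intro sum.cong)
      (auto simp: unit_rows_cols_index cofactor_def mat_delete_unit_rows_cols)
  finally show ?thesis using expand[of t] expand[of 0] i by simp
qed

lemma deriv_affine: "deriv (\<lambda>t. a + t * (b :: real)) x = b"
  by (rule DERIV_imp_deriv) (auto intro!: derivative_eq_intros)

lemma pderivs_det_diag_vars:
  fixes Mf :: "('v \<Rightarrow> real) \<Rightarrow> real mat"
  assumes carrier: "\<And>p. Mf p \<in> carrier_mat m m"
    and pos: "inj_on pos V" "\<And>v. v \<in> V \<Longrightarrow> pos v < m"
    and upd: "\<And>p v t. v \<in> V \<Longrightarrow> Mf (p(v := t)) = update_diag (Mf p) (pos v) t"
    and vs: "distinct vs" "set vs \<subseteq> V"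
  shows "pderivs vs (\<lambda>p. det (Mf p)) = (\<lambda>p. det (unit_rows_cols (Mf p) (pos ` set vs)))"
  using vs
proof (induction vs)
  case Nil
  then show ?case by simp
next
  case (Cons v vs)
  let ?U = "pos ` set vs"
  have v: "v \<in> V" and fresh: "pos v \<notin> ?U"
    using Cons.prems pos(1) by (auto dest: inj_onD)
  show ?case
  proof
    fix p
    have "pderivs (v # vs) (\<lambda>p. det (Mf p)) p
        = deriv (\<lambda>t. det (update_diag (unit_rows_cols (Mf p) ?U) (pos v) t)) (p v)"
      using Cons by (simp add: partial_def upd[OF v] unit_rows_cols_update_diag[OF fresh])
    also have "\<dots> = det (unit_rows_cols (unit_rows_cols (Mf p) ?U) {pos v})"
      by (subst det_update_diag[OF unit_rows_cols_carrier[OF carrier] pos(2)[OF v]]) (rule deriv_affine)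
    finally show "pderivs (v # vs) (\<lambda>p. det (Mf p)) p = det (unit_rows_cols (Mf p) (pos ` set (v # vs)))"
      by (simp add: unit_rows_cols_unit_rows_cols Un_commute)
  qed
qed

definition H_mat :: "real \<Rightarrow> real \<Rightarrow> (nat \<Rightarrow> real) \<Rightarrow> (nat \<Rightarrow> real) \<Rightarrow>
                     real mat \<Rightarrow> real mat \<Rightarrow> real mat \<Rightarrow> real mat" where
  "H_mat x w y z A B C =
     (let n = dim_row A; d = dim_col A; dB = dim_col B; nC = dim_row C
      in four_block_mat
           (four_block_mat (w \<cdot>\<^sub>m 1\<^sub>m n) (0\<^sub>m n nC) (0\<^sub>m nC n) (mat_diag nC z))
           (four_block_mat B A (0\<^sub>m nC dB) C)
           (four_block_mat (transpose_mat B) (0\<^sub>m dB nC) (transpose_mat A) (transpose_mat C))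
           (four_block_mat (mat_diag dB y) (0\<^sub>m dB d) (0\<^sub>m d dB) (x \<cdot>\<^sub>m 1\<^sub>m d)))"

lemma Hdet_eq_det_H_mat: "Hdet x w y z A B C = det (H_mat x w y z A B C)"
  unfolding Hdet_def H_mat_def Let_def ..

lemma H_mat_carrier:
  assumes "A \<in> carrier_mat n d" "B \<in> carrier_mat n dB" "C \<in> carrier_mat nC d"
  shows "H_mat x w y z A B C \<in> carrier_mat (n+nC+dB+d) (n+nC+dB+d)"
  using assms unfolding H_mat_def Let_def carrier_mat_def mat_diag_def by simp

lemma update_diag_four_block_mat_upper:
  assumes "A \<in> carrier_mat a a" "B \<in> carrier_mat a b" "C \<in> carrier_mat b a" "D \<in> carrier_mat b b"
    and "i < a"
  shows "update_diag (four_block_mat A B C D) i t = four_block_mat (update_diag A i t) B C D"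
  using assms unfolding update_diag_def by (intro eq_matI) auto

lemma update_diag_four_block_mat_lower:
  assumes "A \<in> carrier_mat a a" "B \<in> carrier_mat a b" "C \<in> carrier_mat b a" "D \<in> carrier_mat b b"
    and "i < b"
  shows "update_diag (four_block_mat A B C D) (a + i) t = four_block_mat A B C (update_diag D i t)"
  using assms unfolding update_diag_def by (intro eq_matI) auto

lemma mat_diag_fun_upd: "i < m \<Longrightarrow> mat_diag m (f(i := t)) = update_diag (mat_diag m f) i t"
  unfolding update_diag_def mat_diag_def by (intro eq_matI) auto

lemma H_mat_fun_upd_y:
  assumes "A \<in> carrier_mat n d" "B \<in> carrier_mat n dB" "C \<in> carrier_mat nC d" "i < dB"
  shows "H_mat x w (y(i := t)) z A B C = update_diag (H_mat x w y z A B C) (n+nC+i) t"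
  using assms unfolding H_mat_def Let_def
  by (subst update_diag_four_block_mat_lower[where a = "n+nC" and b = "dB+d"],
      auto simp: update_diag_four_block_mat_upper[where a = dB and b = d] mat_diag_fun_upd)

lemma H_mat_fun_upd_z:
  assumes "A \<in> carrier_mat n d" "B \<in> carrier_mat n dB" "C \<in> carrier_mat nC d" "j < nC"
  shows "H_mat x w y (z(j := t)) A B C = update_diag (H_mat x w y z A B C) (n+j) t"
  using assms unfolding H_mat_def Let_def
  by (subst update_diag_four_block_mat_upper[where a = "n+nC" and b = "dB+d"],
      auto simp: update_diag_four_block_mat_lower[where a = n and b = nC] mat_diag_fun_upd)

lemma pderivs_Hvar:
  assumes A: "A \<in> carrier_mat n d" and B: "B \<in> carrier_mat n dB" and C: "C \<in> carrier_mat nC d"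
  shows "pderivs (map Inl (sorted_list_of_set ({0..<dB} - S)) @ map Inr (sorted_list_of_set ({0..<nC} - R)))
           (Hvar x w A B C) p =
         det (unit_rows_cols (H_mat x w (\<lambda>i. p (Inl i)) (\<lambda>j. p (Inr j)) A B C)
              ((\<lambda>i. n+nC+i) ` ({0..<dB} - S) \<union> (\<lambda>j. n+j) ` ({0..<nC} - R)))"
proof -
  define Mf where "Mf p = H_mat x w (\<lambda>i. p (Inl i)) (\<lambda>j. p (Inr j)) A B C" for p :: "nat + nat \<Rightarrow> real"
  define pos :: "nat + nat \<Rightarrow> nat" where "pos = case_sum (\<lambda>i. n+nC+i) (\<lambda>j. n+j)"
  define V :: "(nat + nat) set" where "V = Inl ` {0..<dB} \<union> Inr ` {0..<nC}"
  define vs where "vs = map Inl (sorted_list_of_set ({0..<dB} - S)) @ map Inr (sorted_list_of_set ({0..<nC} - R))"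
  have upd: "Mf (p(v := t)) = update_diag (Mf p) (pos v) t" if "v \<in> V" for p v t
  proof -
    have "(\<lambda>i. (p(Inl i' := t)) (Inl i)) = (\<lambda>i. p (Inl i))(i' := t)"
      "(\<lambda>j. (p(Inl i' := t)) (Inr j)) = (\<lambda>j. p (Inr j))"
      "(\<lambda>i. (p(Inr j' := t)) (Inl i)) = (\<lambda>i. p (Inl i))"
      "(\<lambda>j. (p(Inr j' := t)) (Inr j)) = (\<lambda>j. p (Inr j))(j' := t)" for i' j'
      by auto
    with that show ?thesis
      unfolding Mf_def V_def pos_def using H_mat_fun_upd_y[OF A B C] H_mat_fun_upd_z[OF A B C] by auto
  qed
  have "pderivs vs (\<lambda>p. det (Mf p)) = (\<lambda>p. det (unit_rows_cols (Mf p) (pos ` set vs)))"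
  proof (rule pderivs_det_diag_vars[OF _ _ _ upd])
    show "Mf p \<in> carrier_mat (n+nC+dB+d) (n+nC+dB+d)" for p
      unfolding Mf_def by (rule H_mat_carrier[OF A B C])
    show "inj_on pos V" by (auto simp: V_def pos_def inj_on_def)
    show "pos v < n+nC+dB+d" if "v \<in> V" for v using that by (auto simp: V_def pos_def)
    show "distinct vs" by (auto simp: vs_def distinct_map)
    show "set vs \<subseteq> V" by (auto simp: vs_def V_def)
  qed
  moreover have "pos ` set vs = (\<lambda>i. n+nC+i) ` ({0..<dB} - S) \<union> (\<lambda>j. n+j) ` ({0..<nC} - R)"
    unfolding vs_def pos_def by (auto simp: image_Un image_image)
  moreover have "Hvar x w A B C = (\<lambda>p. det (Mf p))"
    by (simp add: fun_eq_iff Hvar_def Mf_def Hdet_eq_det_H_mat)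
  ultimately show ?thesis
    by (simp add: vs_def Mf_def)
qed

section \<open>Principal minors\<close>

lemma det_permute_rows_cols:
  fixes N :: "'a :: comm_ring_1 mat"
  assumes N: "N \<in> carrier_mat m m" and p: "p permutes {0..<m}"
  shows "det (mat m m (\<lambda>(i,j). N $$ (p i, p j))) = det N"
proof -
  let ?R = "mat m m (\<lambda>(i,j). N $$ (p i, j))"
  have pm: "p i < m" if "i < m" for i using permutes_in_image[OF p] that by auto
  have "transpose_mat (mat m m (\<lambda>(i,j). N $$ (p i, p j))) = mat m m (\<lambda>(i,j). transpose_mat ?R $$ (p i, j))"
    using pm by (intro eq_matI) auto
  then have "det (mat m m (\<lambda>(i,j). N $$ (p i, p j))) = signof p * det (transpose_mat ?R)"
    by (metis det_permute_rows det_transpose p transpose_carrier_mat mat_carrier)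
  also have "det (transpose_mat ?R) = signof p * det N"
    using det_transpose[of ?R m] det_permute_rows[OF N p] by simp
  finally show ?thesis
    by (simp flip: of_int_mult mult.assoc)
qed

lemma card_complement_image:
  assumes U: "U \<subseteq> {0..<m}" and g: "inj_on g {0..<t}" "g ` {0..<t} = {0..<m} - U"
  shows "m = t + card U"
proof -
  have "t = card ({0..<m} - U)" using g card_image by fastforce
  then show ?thesis
    using U finite_subset[OF U] card_mono[OF _ U] by (simp add: card_Diff_subset)
qed

lemma extend_to_permutes:
  fixes g :: "nat \<Rightarrow> nat"
  assumes U: "U \<subseteq> {0..<m}" and g: "inj_on g {0..<t}" "g ` {0..<t} = {0..<m} - U"
  obtains \<pi> where "\<pi> permutes {0..<m}" "\<And>i. i < t \<Longrightarrow> \<pi> i = g i"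
    "\<And>i. i < m \<Longrightarrow> \<pi> i \<in> U \<longleftrightarrow> t \<le> i"
proof -
  have m: "m = t + card U" by (rule card_complement_image[OF U g])
  obtain h where h: "bij_betw h {0..<card U} U"
    using ex_bij_betw_nat_finite[OF finite_subset[OF U]] by blast
  define \<pi> where "\<pi> i = (if i < t then g i else if i < m then h (i - t) else i)" for i
  have "\<pi> ` {0..<t} = g ` {0..<t}" "inj_on \<pi> {0..<t} = inj_on g {0..<t}"
    by (auto simp: \<pi>_def intro!: image_cong inj_on_cong)
  then have low: "\<pi> ` {0..<t} = {0..<m} - U" and "inj_on \<pi> {0..<t}"
    using g by simp_all
  have shift: "{t..<m} = (\<lambda>j. j + t) ` {0..<card U}"
    using m by (simp add: add.commute)
  have "(\<pi> \<circ> (\<lambda>j. j + t)) ` {0..<card U} = h ` {0..<card U}"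
    "inj_on (\<pi> \<circ> (\<lambda>j. j + t)) {0..<card U} = inj_on h {0..<card U}"
    by (auto simp: \<pi>_def m intro!: image_cong inj_on_cong)
  then have on_shift: "(\<pi> \<circ> (\<lambda>j. j + t)) ` {0..<card U} = U" "inj_on (\<pi> \<circ> (\<lambda>j. j + t)) {0..<card U}"
    using h by (simp_all add: bij_betw_def)
  have high: "\<pi> ` {t..<m} = U"
    unfolding shift image_comp by (rule on_shift(1))
  have "inj_on \<pi> {t..<m}"
    unfolding shift by (rule inj_on_imageI[OF on_shift(2)])
  have split: "{0..<m} = {0..<t} \<union> {t..<m}" using m by auto
  have "inj_on \<pi> {0..<m}"
    unfolding split using low high \<open>inj_on \<pi> {0..<t}\<close> \<open>inj_on \<pi> {t..<m}\<close>
    by (subst inj_on_Un) auto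
  then have "\<pi> permutes {0..<m}"
    by (rule inj_on_nat_permutes) (use low high split U in \<open>auto simp: \<pi>_def\<close>)
  moreover have "\<pi> i \<in> U \<longleftrightarrow> t \<le> i" if "i < m" for i
  proof (cases "i < t")
    case True
    then have "\<pi> i \<in> \<pi> ` {0..<t}" by simp
    then show ?thesis using low True by auto
  next
    case False
    then have "\<pi> i \<in> \<pi> ` {t..<m}" using that by simp
    then show ?thesis using high False by auto
  qed
  ultimately show thesis using that by (simp add: \<pi>_def)
qed

lemma det_unit_rows_cols:
  fixes M :: "'a :: idom mat"
  assumes M: "M \<in> carrier_mat m m" and U: "U \<subseteq> {0..<m}"
    and g: "inj_on g {0..<t}" "g ` {0..<t} = {0..<m} - U"
  shows "det (unit_rows_cols M U) = det (mat t t (\<lambda>(i,j). M $$ (g i, g j)))"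
proof -
  have m: "m = t + card U" by (rule card_complement_image[OF U g])
  obtain \<pi> where perm: "\<pi> permutes {0..<m}" and \<pi>: "\<And>i. i < t \<Longrightarrow> \<pi> i = g i"
    and in_U: "\<And>i. i < m \<Longrightarrow> \<pi> i \<in> U \<longleftrightarrow> t \<le> i"
    using extend_to_permutes[OF U g] by blast
  have "det (unit_rows_cols M U) = det (mat m m (\<lambda>(i,j). unit_rows_cols M U $$ (\<pi> i, \<pi> j)))"
    by (rule det_permute_rows_cols[symmetric, OF unit_rows_cols_carrier[OF M] perm])
  also have "mat m m (\<lambda>(i,j). unit_rows_cols M U $$ (\<pi> i, \<pi> j)) =
     four_block_mat (mat t t (\<lambda>(i,j). M $$ (g i, g j))) (0\<^sub>m t (card U)) (0\<^sub>m (card U) t) (1\<^sub>m (card U))"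
  proof (rule eq_matI)
    fix i j
    assume "i < dim_row (four_block_mat (mat t t (\<lambda>(i,j). M $$ (g i, g j)))
                          (0\<^sub>m t (card U)) (0\<^sub>m (card U) t) (1\<^sub>m (card U)))"
      and "j < dim_col (four_block_mat (mat t t (\<lambda>(i,j). M $$ (g i, g j)))
                          (0\<^sub>m t (card U)) (0\<^sub>m (card U) t) (1\<^sub>m (card U)))"
    then have i: "i < m" and j: "j < m" using m by auto
    have "\<pi> i = \<pi> j \<longleftrightarrow> i = j" "\<pi> i < m" "\<pi> j < m"
      using permutes_inj_on[OF perm] permutes_in_image[OF perm] i j by (auto dest: inj_onD)
    then show "mat m m (\<lambda>(i,j). unit_rows_cols M U $$ (\<pi> i, \<pi> j)) $$ (i,j) =
        four_block_mat (mat t t (\<lambda>(i,j). M $$ (g i, g j)))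
          (0\<^sub>m t (card U)) (0\<^sub>m (card U) t) (1\<^sub>m (card U)) $$ (i,j)"
      using M i j m in_U[OF i] in_U[OF j] \<pi>[of i] \<pi>[of j]
      by (cases "i < t"; cases "j < t") (auto simp: unit_rows_cols_index)
  qed (use m in auto)
  also have "det \<dots> = det (mat t t (\<lambda>(i,j). M $$ (g i, g j)))"
    by (subst det_four_block_mat_lower_left_zero[of _ t _ "card U"]) auto
  finally show ?thesis .
qed

section \<open>The principal minor of H at Y = Z = 0\<close>

lemma pick_atLeast0: "i < n \<Longrightarrow> pick {0..<n} i = i"
  using pick_reduce_set[of i n UNIV] pick_UNIV by (simp add: atLeast0LessThan lessThan_def)

lemma pick_surj: "finite S \<Longrightarrow> x \<in> S \<Longrightarrow> \<exists>a < card S. pick S a = x"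
  using pick_card_in_set[of x S] psubset_card_mono[of S "{a \<in> S. a < x}"] by auto

lemma cols_sub_carrier:
  assumes "B \<in> carrier_mat n dB" "S \<subseteq> {0..<dB}"
  shows "cols_sub B S \<in> carrier_mat n (card S)"
proof -
  have "{j. j < dB \<and> j \<in> S} = S" "{i. i < n \<and> i \<in> {0..<n}} = {0..<n}" using assms by auto
  then show ?thesis using assms unfolding cols_sub_def carrier_mat_def by (simp add: dim_submatrix)
qed

lemma cols_sub_index:
  assumes "B \<in> carrier_mat n dB" "S \<subseteq> {0..<dB}" "i < n" "a < card S"
  shows "cols_sub B S $$ (i,a) = B $$ (i, pick S a)"
proof -
  have "{j. j < dB \<and> j \<in> S} = S" using assms by auto
  then show ?thesis using assms unfolding cols_sub_def
    by (subst submatrix_index) (auto simp: pick_atLeast0)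
qed

lemma rows_sub_carrier:
  assumes "C \<in> carrier_mat nC d" "R \<subseteq> {0..<nC}"
  shows "rows_sub C R \<in> carrier_mat (card R) d"
proof -
  have "{i. i < nC \<and> i \<in> R} = R" "{j. j < d \<and> j \<in> {0..<d}} = {0..<d}" using assms by auto
  then show ?thesis using assms unfolding rows_sub_def carrier_mat_def by (simp add: dim_submatrix)
qed

lemma rows_sub_index:
  assumes "C \<in> carrier_mat nC d" "R \<subseteq> {0..<nC}" "a < card R" "j < d"
  shows "rows_sub C R $$ (a,j) = C $$ (pick R a, j)"
proof -
  have "{i. i < nC \<and> i \<in> R} = R" using assms by auto
  then show ?thesis using assms unfolding rows_sub_def
    by (subst submatrix_index) (auto simp: pick_atLeast0)
qed

text \<open>The principal submatrix of \<open>H(x,w,0,0)\<close> on the index blocks \<open>[n]\<close>, \<open>S\<close>, \<open>R\<close>, \<open>[d]\<close>,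
  in this order (\<open>S\<close> is moved in front of \<open>R\<close>); \<open>BS\<close> and \<open>CR\<close> stand for \<open>B_{:,S}\<close> and \<open>C_{R,:}\<close>.\<close>

definition H_minor :: "real \<Rightarrow> real \<Rightarrow> real mat \<Rightarrow> real mat \<Rightarrow> real mat \<Rightarrow> real mat" where
  "H_minor x w A BS CR = (let n = dim_row A; d = dim_col A; k = dim_col BS; r = dim_row CR in
     four_block_mat
       (four_block_mat (w \<cdot>\<^sub>m 1\<^sub>m n) BS (transpose_mat BS) (0\<^sub>m k k))
       (four_block_mat (0\<^sub>m n r) A (0\<^sub>m k r) (0\<^sub>m k d))
       (four_block_mat (0\<^sub>m r n) (0\<^sub>m r k) (transpose_mat A) (0\<^sub>m d k))
       (four_block_mat (0\<^sub>m r r) CR (transpose_mat CR) (x \<cdot>\<^sub>m 1\<^sub>m d)))"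

lemma H_minor_carrier:
  "A \<in> carrier_mat n d \<Longrightarrow> BS \<in> carrier_mat n k \<Longrightarrow> CR \<in> carrier_mat r d \<Longrightarrow>
   H_minor x w A BS CR \<in> carrier_mat (n+k+(r+d)) (n+k+(r+d))"
  unfolding H_minor_def Let_def by auto

lemma H_mat_index_H_minor:
  assumes dims: "dim_row A = n" "dim_col A = d" "dim_row B = n" "dim_col B = dB" "dim_row C = nC" "dim_col C = d"
      "dim_row BS = n" "dim_col BS = k" "dim_row CR = r" "dim_col CR = d"
  and BSi: "\<And>i a. i < n \<Longrightarrow> a < k \<Longrightarrow> BS $$ (i, a) = B $$ (i, pick S a)"
  and CRi: "\<And>a j. a < r \<Longrightarrow> j < d \<Longrightarrow> CR $$ (a, j) = C $$ (pick R a, j)"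
  and ri: "(i < n \<and> gi = i)
      \<or> (\<exists>a. i = n + a \<and> a < k \<and> gi = n + nC + pick S a \<and> pick S a < dB)
      \<or> (\<exists>a. i = n + k + a \<and> a < r \<and> gi = n + pick R a \<and> pick R a < nC)
      \<or> (\<exists>a. i = n + k + r + a \<and> a < d \<and> gi = n + nC + dB + a)"
  and rj: "(j < n \<and> gj = j)
      \<or> (\<exists>a. j = n + a \<and> a < k \<and> gj = n + nC + pick S a \<and> pick S a < dB)
      \<or> (\<exists>a. j = n + k + a \<and> a < r \<and> gj = n + pick R a \<and> pick R a < nC)
      \<or> (\<exists>a. j = n + k + r + a \<and> a < d \<and> gj = n + nC + dB + a)"
  shows "H_mat x w (\<lambda>_. 0) (\<lambda>_. 0) A B C $$ (gi, gj) = H_minor x w A BS CR $$ (i,j)"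
  using ri rj unfolding H_mat_def H_minor_def Let_def dims
  by (elim disjE exE conjE; simp add: mat_diag_def BSi CRi dims)

lemma less_add4_cases [consumes 1, case_names first second third fourth]:
  fixes i :: nat
  assumes "i < n + k + r + d"
  obtains "i < n" | a where "a < k" "i = n + a" | a where "a < r" "i = n + k + a"
    | a where "a < d" "i = n + k + r + a"
proof -
  consider "i < n" | "n \<le> i" "i < n + k" | "n + k \<le> i" "i < n + k + r" | "n + k + r \<le> i"
    by linarith
  then show ?thesis
  proof cases
    case 2
    then show ?thesis using that(2)[of "i - n"] by simp
  next
    case 3
    then show ?thesis using that(3)[of "i - n - k"] by simp
  next
    case 4
    then show ?thesis using that(4)[of "i - n - k - r"] assms by simp
  qed (use that(1) in simp)
qed

definition minor_index :: "nat \<Rightarrow> nat \<Rightarrow> nat \<Rightarrow> nat set \<Rightarrow> nat set \<Rightarrow> nat \<Rightarrow> nat" where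
  "minor_index n nC dB S R i = (let k = card S; r = card R in
     if i < n then i else if i < n + k then n + nC + pick S (i - n)
     else if i < n + k + r then n + pick R (i - n - k) else i - (n + k + r) + (n + nC + dB))"

context
  fixes n nC dB d k r :: nat and S R :: "nat set"
  assumes S: "S \<subseteq> {0..<dB}" "card S = k" and R: "R \<subseteq> {0..<nC}" "card R = r"
begin

private abbreviation "g \<equiv> minor_index n nC dB S R"

private lemma pick_S: "a < k \<Longrightarrow> pick S a \<in> S" "a < k \<Longrightarrow> pick S a < dB"
  using pick_in_set_le[of a S] S by auto

private lemma pick_R: "a < r \<Longrightarrow> pick R a \<in> R" "a < r \<Longrightarrow> pick R a < nC"
  using pick_in_set_le[of a R] R by auto

private lemma minor_index_simps:
  "i < n \<Longrightarrow> g i = i"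
  "a < k \<Longrightarrow> g (n + a) = n + nC + pick S a"
  "a < r \<Longrightarrow> g (n + k + a) = n + pick R a"
  "g (n + k + r + a) = n + nC + dB + a"
  by (simp_all add: minor_index_def S(2) R(2))

lemma minor_index_cases:
  assumes "i < n + k + r + d"
  shows "(i < n \<and> g i = i)
      \<or> (\<exists>a. i = n + a \<and> a < k \<and> g i = n + nC + pick S a \<and> pick S a < dB)
      \<or> (\<exists>a. i = n + k + a \<and> a < r \<and> g i = n + pick R a \<and> pick R a < nC)
      \<or> (\<exists>a. i = n + k + r + a \<and> a < d \<and> g i = n + nC + dB + a)"
  by (rule less_add4_cases[OF assms]) (simp_all add: minor_index_simps pick_S pick_R)

lemma inj_on_minor_index: "inj_on g {0..<n + k + r + d}"
proof -
  define g' where "g' q = (if q < n then q else if q < n + nC then n + k + card {a\<in>R. a < q - n}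
     else if q < n + nC + dB then n + card {a\<in>S. a < q - n - nC} else q - (n + nC + dB) + (n + k + r))"
    for q
  have "g' (g i) = i" if "i < n + k + r + d" for i
    by (rule less_add4_cases[OF that])
      (use pick_S pick_R card_pick_le S(2) R(2) in \<open>simp_all add: g'_def minor_index_simps\<close>)
  then show ?thesis by (intro inj_on_inverseI[of _ g']) simp
qed

lemma minor_index_image:
  "g ` {0..<n + k + r + d} = {0..<n + nC + dB + d} - ((\<lambda>i. n + nC + i) ` ({0..<dB} - S) \<union> (\<lambda>j. n + j) ` ({0..<nC} - R))"
  (is "_ = _ - ?U")
proof
  show "g ` {0..<n + k + r + d} \<subseteq> {0..<n + nC + dB + d} - ?U"
  proof
    fix q assume "q \<in> g ` {0..<n + k + r + d}"
    then obtain i where i: "i < n + k + r + d" and q: "q = g i" by auto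
    from minor_index_cases[OF i] show "q \<in> {0..<n + nC + dB + d} - ?U"
      unfolding q by (elim disjE exE conjE) (auto simp: pick_S(1) pick_R(1))
  qed
  have "finite S" "finite R" using S R finite_subset by auto
  show "{0..<n + nC + dB + d} - ?U \<subseteq> g ` {0..<n + k + r + d}"
  proof
    fix q assume q: "q \<in> {0..<n + nC + dB + d} - ?U"
    then have "q < n + nC + dB + d" by simp
    then show "q \<in> g ` {0..<n + k + r + d}"
    proof (cases rule: less_add4_cases)
      case first
      then show ?thesis by (intro image_eqI[of _ _ q]) (auto simp: minor_index_simps)
    next
      case (second a)
      then have "a \<in> R" using q by auto
      then obtain b where "b < r" "pick R b = a" using pick_surj[OF \<open>finite R\<close>] R(2) by blast
      with second show ?thesis by (intro image_eqI[of _ _ "n + k + b"]) (auto simp: minor_index_simps)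
    next
      case (third a)
      then have "a \<in> S" using q by auto
      then obtain b where "b < k" "pick S b = a" using pick_surj[OF \<open>finite S\<close>] S(2) by blast
      with third show ?thesis by (intro image_eqI[of _ _ "n + b"]) (auto simp: minor_index_simps)
    next
      case (fourth a)
      then show ?thesis by (intro image_eqI[of _ _ "n + k + r + a"]) (auto simp: minor_index_simps)
    qed
  qed
qed

end

lemma det_H_mat_unit_rows_cols:
  assumes A: "A \<in> carrier_mat n d" and B: "B \<in> carrier_mat n dB" and C: "C \<in> carrier_mat nC d"
    and S: "S \<subseteq> {0..<dB}" "card S = k" and R: "R \<subseteq> {0..<nC}" "card R = r"
  shows "det (unit_rows_cols (H_mat x w (\<lambda>_. 0) (\<lambda>_. 0) A B C)
              ((\<lambda>i. n+nC+i) ` ({0..<dB} - S) \<union> (\<lambda>j. n+j) ` ({0..<nC} - R)))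
         = det (H_minor x w A (cols_sub B S) (rows_sub C R))"
proof -
  let ?g = "minor_index n nC dB S R"
  have "det (unit_rows_cols (H_mat x w (\<lambda>_. 0) (\<lambda>_. 0) A B C)
              ((\<lambda>i. n+nC+i) ` ({0..<dB} - S) \<union> (\<lambda>j. n+j) ` ({0..<nC} - R)))
      = det (mat (n+k+r+d) (n+k+r+d) (\<lambda>(i,j). H_mat x w (\<lambda>_. 0) (\<lambda>_. 0) A B C $$ (?g i, ?g j)))"
    using H_mat_carrier[OF A B C] inj_on_minor_index[OF S R] minor_index_image[OF S R]
    by (intro det_unit_rows_cols) auto
  also have "mat (n+k+r+d) (n+k+r+d) (\<lambda>(i,j). H_mat x w (\<lambda>_. 0) (\<lambda>_. 0) A B C $$ (?g i, ?g j))
           = H_minor x w A (cols_sub B S) (rows_sub C R)"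
  proof -
    have BS: "cols_sub B S \<in> carrier_mat n k" and CR: "rows_sub C R \<in> carrier_mat r d"
      using cols_sub_carrier[OF B S(1)] rows_sub_carrier[OF C R(1)] S R by simp_all
    have minor: "H_minor x w A (cols_sub B S) (rows_sub C R) \<in> carrier_mat (n+k+r+d) (n+k+r+d)"
      using H_minor_carrier[OF A BS CR] by (simp add: add.assoc)
    show ?thesis
    proof (rule eq_matI)
      fix i j assume "i < dim_row (H_minor x w A (cols_sub B S) (rows_sub C R))"
        and "j < dim_col (H_minor x w A (cols_sub B S) (rows_sub C R))"
      then have i: "i < n + k + r + d" and j: "j < n + k + r + d" using minor by auto
      have "H_mat x w (\<lambda>_. 0) (\<lambda>_. 0) A B C $$ (?g i, ?g j)
          = H_minor x w A (cols_sub B S) (rows_sub C R) $$ (i,j)"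
        by (rule H_mat_index_H_minor[OF carrier_matD[OF A] carrier_matD[OF B] carrier_matD[OF C]
              carrier_matD[OF BS] carrier_matD[OF CR] _ _ minor_index_cases[OF S R i]
              minor_index_cases[OF S R j]])
          (simp_all add: cols_sub_index[OF B S(1)] rows_sub_index[OF C R(1)] S R)
      then show "mat (n+k+r+d) (n+k+r+d) (\<lambda>(i,j). H_mat x w (\<lambda>_. 0) (\<lambda>_. 0) A B C $$ (?g i, ?g j)) $$ (i,j)
             = H_minor x w A (cols_sub B S) (rows_sub C R) $$ (i,j)"
        using i j by simp
    qed (use minor in auto)
  qed
  finally show ?thesis .
qed

section \<open>Schur complements, inverses and pseudoinverses\<close>

lemma assoc_mult_mat_dims:
  "dim_col A = dim_row B \<Longrightarrow> dim_col B = dim_row C \<Longrightarrow> A * B * C = A * (B * (C :: 'a :: semiring_0 mat))"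
  by (rule assoc_mult_mat[OF carrier_matI[OF refl refl] carrier_matI[OF _ refl] carrier_matI[OF _ refl]]) simp_all

lemma transpose_mult_dims:
  "dim_col A = dim_row B \<Longrightarrow> transpose_mat (A * B) = transpose_mat B * transpose_mat (A :: 'a :: comm_semiring_0 mat)"
  by (rule transpose_mult[OF carrier_matI[OF refl refl] carrier_matI[OF _ refl]]) simp

lemma mult_add_distrib_mat_dims:
  "dim_col A = dim_row B \<Longrightarrow> dim_row B = dim_row C \<Longrightarrow> dim_col B = dim_col C \<Longrightarrow>
   A * (B + C) = A * B + A * (C :: 'a :: semiring_0 mat)"
  by (rule mult_add_distrib_mat[OF carrier_matI[OF refl refl] carrier_matI[OF _ refl] carrier_matI]) simp_all

lemma add_mult_distrib_mat_dims:
  "dim_row A = dim_row B \<Longrightarrow> dim_col A = dim_col B \<Longrightarrow> dim_col A = dim_row C \<Longrightarrow>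
   (A + B) * C = A * C + B * (C :: 'a :: semiring_0 mat)"
  by (rule add_mult_distrib_mat[OF carrier_matI[OF refl refl] carrier_matI carrier_matI[OF _ refl]]) simp_all

lemma mult_minus_distrib_mat_dims:
  "dim_col A = dim_row B \<Longrightarrow> dim_row B = dim_row C \<Longrightarrow> dim_col B = dim_col C \<Longrightarrow>
   A * (B - C) = A * B - A * (C :: 'a :: ring mat)"
  by (rule mult_minus_distrib_mat[OF carrier_matI[OF refl refl] carrier_matI[OF _ refl] carrier_matI]) simp_all

lemma minus_mult_distrib_mat_dims:
  "dim_row A = dim_row B \<Longrightarrow> dim_col A = dim_col B \<Longrightarrow> dim_col A = dim_row C \<Longrightarrow>
   (A - B) * C = A * C - B * (C :: 'a :: ring mat)"
  by (rule minus_mult_distrib_mat[OF carrier_matI[OF refl refl] carrier_matI carrier_matI[OF _ refl]]) simp_all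

lemma mult_smult_assoc_mat_dims:
  "dim_col A = dim_row B \<Longrightarrow> (c \<cdot>\<^sub>m A) * B = c \<cdot>\<^sub>m (A * (B :: 'a :: comm_ring mat))"
  by (rule mult_smult_assoc_mat[OF carrier_matI[OF refl refl] carrier_matI[OF _ refl]]) simp

lemma mult_smult_distrib_dims:
  "dim_col A = dim_row B \<Longrightarrow> A * (c \<cdot>\<^sub>m B) = c \<cdot>\<^sub>m (A * (B :: 'a :: comm_ring mat))"
  by (rule mult_smult_distrib[OF carrier_matI[OF refl refl] carrier_matI[OF _ refl]]) simp

text \<open>With dimension equations instead of carrier hypotheses, simp can normalise matrix
  products once the dimensions of all factors are known.\<close>

lemmas mat_algebra_dims = assoc_mult_mat_dims transpose_mult_dims mult_add_distrib_mat_dims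
  add_mult_distrib_mat_dims mult_minus_distrib_mat_dims minus_mult_distrib_mat_dims
  mult_smult_assoc_mat_dims mult_smult_distrib_dims

lemma minus_zero_mat_right [simp]: "dim_row A = a \<Longrightarrow> dim_col A = b \<Longrightarrow> A - 0\<^sub>m a b = (A :: 'a :: group_add mat)"
  by (intro eq_matI) auto

lemma add_zero_mat_right [simp]: "dim_row A = a \<Longrightarrow> dim_col A = b \<Longrightarrow> A + 0\<^sub>m a b = (A :: 'a :: monoid_add mat)"
  by (intro eq_matI) auto

lemma add_zero_mat_left [simp]: "dim_row A = a \<Longrightarrow> dim_col A = b \<Longrightarrow> 0\<^sub>m a b + A = (A :: 'a :: monoid_add mat)"
  by (intro eq_matI) auto

lemma uminus_zero_mat [simp]: "- 0\<^sub>m a b = (0\<^sub>m a b :: 'a :: group_add mat)"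
  by (intro eq_matI) auto

lemma det_four_block_mat_schur:
  fixes A :: "'a :: idom mat"
  assumes A: "A \<in> carrier_mat n n" and B: "B \<in> carrier_mat n m" and C: "C \<in> carrier_mat m n"
    and D: "D \<in> carrier_mat m m" and Ai: "Ai \<in> carrier_mat n n" and inv: "Ai * A = 1\<^sub>m n"
  shows "det (four_block_mat A B C D) = det A * det (D - C * Ai * B)"
proof -
  let ?S = "D - C * Ai * B"
  let ?L = "four_block_mat (1\<^sub>m n) (0\<^sub>m n m) (C * Ai) (1\<^sub>m m)"
  let ?R = "four_block_mat A B (0\<^sub>m m n) ?S"
  have S: "?S \<in> carrier_mat m m" and CAi: "C * Ai \<in> carrier_mat m n" using A B C D Ai by auto
  have "?L * ?R = four_block_mat (1\<^sub>m n * A + 0\<^sub>m n m * 0\<^sub>m m n) (1\<^sub>m n * B + 0\<^sub>m n m * ?S)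
      (C * Ai * A + 1\<^sub>m m * 0\<^sub>m m n) (C * Ai * B + 1\<^sub>m m * ?S)"
    by (rule mult_four_block_mat[OF one_carrier_mat zero_carrier_mat CAi one_carrier_mat A B zero_carrier_mat S])
  also have "\<dots> = four_block_mat A B C D"
  proof -
    have "1\<^sub>m n * A + 0\<^sub>m n m * 0\<^sub>m m n = A" "1\<^sub>m n * B + 0\<^sub>m n m * ?S = B"
      using A B S by (simp_all add: left_mult_zero_mat[OF S])
    moreover have "C * Ai * A + 1\<^sub>m m * 0\<^sub>m m n = C"
      using C Ai A inv by (simp add: assoc_mult_mat[OF C Ai A])
    moreover have "C * Ai * B + 1\<^sub>m m * ?S = D"
      using A B C D Ai S by (intro eq_matI) auto
    ultimately show ?thesis by simp
  qed
  finally have "?L * ?R = four_block_mat A B C D" .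
  moreover have "det (?L * ?R) = det ?L * det ?R"
    by (rule det_mult[of _ "n+m"]) (use A B S CAi in auto)
  moreover have "det ?L = 1"
    by (subst det_four_block_mat_upper_right_zero[of _ n _ m]) (use CAi in auto)
  moreover have "det ?R = det A * det ?S"
    by (rule det_four_block_mat_lower_left_zero[OF A B refl S])
  ultimately show ?thesis by simp
qed

lemma det_neq_0_obtains_inverse:
  fixes G :: "'a :: field mat"
  assumes G: "G \<in> carrier_mat k k" and d: "det G \<noteq> 0"
  obtains Gi where "Gi \<in> carrier_mat k k" "G * Gi = 1\<^sub>m k" "Gi * G = 1\<^sub>m k"
proof
  let ?Gi = "(1 / det G) \<cdot>\<^sub>m adj_mat G"
  show "?Gi \<in> carrier_mat k k" using adj_mat(1)[OF G] by simp
  have "G * ?Gi = (1 / det G) \<cdot>\<^sub>m (G * adj_mat G)"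
    using mult_smult_distrib[OF G adj_mat(1)[OF G]] .
  then show "G * ?Gi = 1\<^sub>m k" unfolding adj_mat(2)[OF G] using d by (intro eq_matI) auto
  have "?Gi * G = (1 / det G) \<cdot>\<^sub>m (adj_mat G * G)"
    using mult_smult_assoc_mat[OF adj_mat(1)[OF G] G] .
  then show "?Gi * G = 1\<^sub>m k" unfolding adj_mat(3)[OF G] using d by (intro eq_matI) auto
qed

lemma symmetric_inverse_mat:
  fixes G :: "'a :: comm_ring_1 mat"
  assumes G: "G \<in> carrier_mat k k" and Gi: "Gi \<in> carrier_mat k k" and sym: "transpose_mat G = G"
    and inv: "G * Gi = 1\<^sub>m k"
  shows "transpose_mat Gi = Gi"
proof -
  have GiT: "transpose_mat Gi \<in> carrier_mat k k" using Gi by simp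
  have "transpose_mat Gi = transpose_mat Gi * (G * Gi)" using inv GiT by simp
  also have "\<dots> = transpose_mat (G * Gi) * Gi"
    using GiT G Gi transpose_mult[OF G Gi] sym by simp
  finally show ?thesis using inv Gi by simp
qed

lemma gram_mult_vec_eq_0:
  fixes M :: "real mat"
  assumes M: "M \<in> carrier_mat a b" and v: "v \<in> carrier_vec b"
    and z: "(transpose_mat M * M) *\<^sub>v v = 0\<^sub>v b"
  shows "M *\<^sub>v v = 0\<^sub>v a"
proof -
  have Mv: "M *\<^sub>v v \<in> carrier_vec a" using M v by simp
  have "(M *\<^sub>v v) \<bullet> (M *\<^sub>v v) = (transpose_mat M *\<^sub>v (M *\<^sub>v v)) \<bullet> v"
    by (rule transpose_vec_mult_scalar[OF M v Mv, symmetric])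
  also have "\<dots> = 0" using M v z by simp
  finally show ?thesis using conjugate_square_eq_0_vec[OF Mv] by simp
qed

definition is_pinv :: "real mat \<Rightarrow> real mat \<Rightarrow> bool" where
  "is_pinv M X \<longleftrightarrow> X \<in> carrier_mat (dim_col M) (dim_row M) \<and>
     M * X * M = M \<and> X * M * X = X \<and>
     transpose_mat (M * X) = M * X \<and> transpose_mat (X * M) = X * M"

lemma is_pinv_unique:
  assumes M: "M \<in> carrier_mat a b" and X: "is_pinv M X" and Y: "is_pinv M Y"
  shows "X = Y"
proof -
  have d: "dim_row M = a" "dim_col M = b" "dim_row X = b" "dim_col X = a" "dim_row Y = b" "dim_col Y = a"
    using X Y M unfolding is_pinv_def by auto
  have x: "M * (X * M) = M" "X * (M * X) = X"
      "transpose_mat X * transpose_mat M = M * X" "transpose_mat M * transpose_mat X = X * M"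
    using X d unfolding is_pinv_def by (simp_all add: mat_algebra_dims)
  have y: "M * (Y * M) = M" "Y * (M * Y) = Y"
      "transpose_mat Y * transpose_mat M = M * Y" "transpose_mat M * transpose_mat Y = Y * M"
    using Y d unfolding is_pinv_def by (simp_all add: mat_algebra_dims)
  have tM: "transpose_mat M = transpose_mat M * (transpose_mat Y * transpose_mat M)"
      "transpose_mat M = transpose_mat M * (transpose_mat X * transpose_mat M)"
    using arg_cong[OF y(1), of transpose_mat] arg_cong[OF x(1), of transpose_mat] d
    by (simp_all add: mat_algebra_dims)
  have "X = X * (transpose_mat X * transpose_mat M)" using x by simp
  also have "\<dots> = X * (transpose_mat X * (transpose_mat M * (transpose_mat Y * transpose_mat M)))"
    by (subst tM(1)[symmetric]) (rule refl)
  also have "\<dots> = X * ((transpose_mat X * transpose_mat M) * (transpose_mat Y * transpose_mat M))"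
    using d by (simp add: mat_algebra_dims)
  also have "\<dots> = X * ((M * X) * (M * Y))" using x y by simp
  also have "\<dots> = (X * (M * X)) * (M * Y)" using d by (simp add: mat_algebra_dims)
  finally have X1: "X = X * (M * Y)" using x by simp
  have "Y = (transpose_mat M * transpose_mat Y) * Y" using y d by (simp add: mat_algebra_dims)
  also have "\<dots> = ((transpose_mat M * (transpose_mat X * transpose_mat M)) * transpose_mat Y) * Y"
    by (subst tM(2)[symmetric]) (rule refl)
  also have "\<dots> = ((transpose_mat M * transpose_mat X) * (transpose_mat M * transpose_mat Y)) * Y"
    using d by (simp add: mat_algebra_dims)
  also have "\<dots> = ((X * M) * (Y * M)) * Y" using x y by simp
  also have "\<dots> = X * (M * (Y * (M * Y)))" using d by (simp add: mat_algebra_dims)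
  finally have Y1: "Y = X * (M * Y)" using y by simp
  show ?thesis using X1 Y1 by simp
qed

lemma pinv_eqI: "M \<in> carrier_mat a b \<Longrightarrow> is_pinv M X \<Longrightarrow> pinv M = X"
  unfolding pinv_def is_pinv_def[symmetric] using is_pinv_unique by blast

lemma pinv_full_col_rank:
  fixes B :: "real mat"
  assumes B: "B \<in> carrier_mat n k" and Gi: "Gi \<in> carrier_mat k k"
    and inv: "transpose_mat B * B * Gi = 1\<^sub>m k" "Gi * (transpose_mat B * B) = 1\<^sub>m k"
  shows "pinv B = Gi * transpose_mat B"
proof (rule pinv_eqI[OF B])
  have sym: "transpose_mat Gi = Gi"
    by (rule symmetric_inverse_mat[OF _ Gi _ inv(1)]) (use B in \<open>auto simp: mat_algebra_dims\<close>)
  have cancel: "transpose_mat B * (B * (Gi * W)) = W" if W: "W \<in> carrier_mat k l" for W l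
  proof -
    have "transpose_mat B * B * Gi * W = transpose_mat B * (B * (Gi * W))"
      using carrier_matD[OF B] carrier_matD[OF Gi] carrier_matD[OF W] by (simp add: mat_algebra_dims)
    then show ?thesis using inv(1) W by simp
  qed
  show "is_pinv B (Gi * transpose_mat B)"
    unfolding is_pinv_def using B Gi inv sym cancel[of "transpose_mat B"]
    by (simp add: mat_algebra_dims)
qed

lemma pinv_full_row_rank:
  fixes C :: "real mat"
  assumes C: "C \<in> carrier_mat r d" and Gi: "Gi \<in> carrier_mat r r"
    and inv: "C * transpose_mat C * Gi = 1\<^sub>m r" "Gi * (C * transpose_mat C) = 1\<^sub>m r"
  shows "pinv C = transpose_mat C * Gi"
proof (rule pinv_eqI[OF C])
  have sym: "transpose_mat Gi = Gi"
    by (rule symmetric_inverse_mat[OF _ Gi _ inv(1)]) (use C in \<open>auto simp: mat_algebra_dims\<close>)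
  have cancel: "Gi * (C * (transpose_mat C * W)) = W" if W: "W \<in> carrier_mat r l" for W l
  proof -
    have "Gi * (C * transpose_mat C) * W = Gi * (C * (transpose_mat C * W))"
      using carrier_matD[OF C] carrier_matD[OF Gi] carrier_matD[OF W] by (simp add: mat_algebra_dims)
    then show ?thesis using inv(2) W by simp
  qed
  show "is_pinv C (transpose_mat C * Gi)"
    unfolding is_pinv_def using C Gi inv sym cancel[of C]
    by (simp add: mat_algebra_dims)
qed

section \<open>Evaluation of the principal minor of H\<close>

lemma mult_mat_vec_zero [simp]: "dim_col A = c \<Longrightarrow> dim_row A = m \<Longrightarrow> A *\<^sub>v 0\<^sub>v c = (0\<^sub>v m :: 'a :: semiring_0 vec)"
  by (intro eq_vecI) (auto simp: scalar_prod_def)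

lemma singular_gram_obtains_kernel_vec:
  fixes M :: "real mat"
  assumes M: "M \<in> carrier_mat a b" and singular: "det (transpose_mat M * M) = 0"
  obtains v where "v \<in> carrier_vec b" "v \<noteq> 0\<^sub>v b" "M *\<^sub>v v = 0\<^sub>v a"
proof -
  obtain v where "v \<in> carrier_vec b" "v \<noteq> 0\<^sub>v b" "(transpose_mat M * M) *\<^sub>v v = 0\<^sub>v b"
    using singular det_0_iff_vec_prod_zero[of "transpose_mat M * M" b] M by auto
  with gram_mult_vec_eq_0[OF M] that show thesis by blast
qed

lemma det_H_minor_singular_col_gram:
  fixes A BS CR :: "real mat"
  assumes A: "A \<in> carrier_mat n d" and BS: "BS \<in> carrier_mat n k" and CR: "CR \<in> carrier_mat r d"
    and singular: "det (transpose_mat BS * BS) = 0"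
  shows "det (H_minor x w A BS CR) = 0"
proof -
  obtain v where v: "v \<in> carrier_vec k" "v \<noteq> 0\<^sub>v k" and BSv: "BS *\<^sub>v v = 0\<^sub>v n"
    using singular_gram_obtains_kernel_vec[OF BS singular] .
  define z where "z = (0\<^sub>v n @\<^sub>v v) @\<^sub>v 0\<^sub>v (r+d)"
  have z: "z \<in> carrier_vec (n+k+(r+d))" unfolding z_def using v by auto
  have dims: "dim_row A = n" "dim_col A = d" "dim_row BS = n" "dim_col BS = k" "dim_row CR = r" "dim_col CR = d"
    using A BS CR by auto
  have "four_block_mat (w \<cdot>\<^sub>m 1\<^sub>m n) BS (transpose_mat BS) (0\<^sub>m k k) *\<^sub>v (0\<^sub>v n @\<^sub>v v) = 0\<^sub>v (n+k)"
    by (subst four_block_mat_mult_vec[of _ n n _ k _ k]) (use A BS v BSv dims in \<open>auto\<close>)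
  moreover have "four_block_mat (0\<^sub>m r n) (0\<^sub>m r k) (transpose_mat A) (0\<^sub>m d k) *\<^sub>v (0\<^sub>v n @\<^sub>v v) = 0\<^sub>v (r+d)"
    by (subst four_block_mat_mult_vec[of _ r n _ k _ d]) (use A BS v dims in \<open>auto\<close>)
  ultimately have "H_minor x w A BS CR *\<^sub>v z = 0\<^sub>v (n+k+(r+d))"
    unfolding H_minor_def Let_def dims z_def
    by (subst four_block_mat_mult_vec[of _ "n+k" "n+k" _ "r+d" _ "r+d"]) (use A BS CR v dims in \<open>auto\<close>)
  moreover have "z \<noteq> 0\<^sub>v (n+k+(r+d))"
  proof
    assume "z = 0\<^sub>v (n+k+(r+d))"
    then have "z $ (n+i) = 0" if "i < k" for i using that by simp
    then have "v $ i = 0" if "i < k" for i using that v(1) unfolding z_def by auto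
    then show False using v by auto
  qed
  ultimately show ?thesis using det_0_iff_vec_prod_zero[OF H_minor_carrier[OF A BS CR]] z by blast
qed

lemma det_H_minor_singular_row_gram:
  fixes A BS CR :: "real mat"
  assumes A: "A \<in> carrier_mat n d" and BS: "BS \<in> carrier_mat n k" and CR: "CR \<in> carrier_mat r d"
    and singular: "det (CR * transpose_mat CR) = 0"
  shows "det (H_minor x w A BS CR) = 0"
proof -
  obtain v where v: "v \<in> carrier_vec r" "v \<noteq> 0\<^sub>v r" and CRv: "transpose_mat CR *\<^sub>v v = 0\<^sub>v d"
    using singular_gram_obtains_kernel_vec[of "transpose_mat CR" d r] CR singular by auto
  define z where "z = 0\<^sub>v (n+k) @\<^sub>v (v @\<^sub>v 0\<^sub>v d)"
  have z: "z \<in> carrier_vec (n+k+(r+d))" unfolding z_def using v by auto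
  have dims: "dim_row A = n" "dim_col A = d" "dim_row BS = n" "dim_col BS = k" "dim_row CR = r" "dim_col CR = d"
    using A BS CR by auto
  have "four_block_mat (0\<^sub>m n r) A (0\<^sub>m k r) (0\<^sub>m k d) *\<^sub>v (v @\<^sub>v 0\<^sub>v d) = 0\<^sub>v (n+k)"
    by (subst four_block_mat_mult_vec[of _ n r _ d _ k]) (use A BS v dims in \<open>auto\<close>)
  moreover have "four_block_mat (0\<^sub>m r r) CR (transpose_mat CR) (x \<cdot>\<^sub>m 1\<^sub>m d) *\<^sub>v (v @\<^sub>v 0\<^sub>v d) = 0\<^sub>v (r+d)"
    by (subst four_block_mat_mult_vec[of _ r r _ d _ d]) (use CR v CRv dims in \<open>auto\<close>)
  ultimately have "H_minor x w A BS CR *\<^sub>v z = 0\<^sub>v (n+k+(r+d))"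
    unfolding H_minor_def Let_def dims z_def
    by (subst four_block_mat_mult_vec[of _ "n+k" "n+k" _ "r+d" _ "r+d"]) (use A BS CR v dims in \<open>auto\<close>)
  moreover have "z \<noteq> 0\<^sub>v (n+k+(r+d))"
  proof
    assume "z = 0\<^sub>v (n+k+(r+d))"
    then have "z $ (n+k+i) = 0" if "i < r" for i using that by simp
    then have "v $ i = 0" if "i < r" for i using that v(1) unfolding z_def by auto
    then show False using v by auto
  qed
  ultimately show ?thesis using det_0_iff_vec_prod_zero[OF H_minor_carrier[OF A BS CR]] z by blast
qed

lemma det_saddle_mat:
  fixes B :: "real mat"
  assumes B: "B \<in> carrier_mat n k" and w: "w \<noteq> 0"
  shows "det (four_block_mat (w \<cdot>\<^sub>m 1\<^sub>m n) B (transpose_mat B) (0\<^sub>m k k))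
       = w^n * (-1/w)^k * det (transpose_mat B * B)"
proof -
  have "det (four_block_mat (w \<cdot>\<^sub>m 1\<^sub>m n) B (transpose_mat B) (0\<^sub>m k k))
      = det (w \<cdot>\<^sub>m 1\<^sub>m n) * det (0\<^sub>m k k - transpose_mat B * ((1/w) \<cdot>\<^sub>m 1\<^sub>m n) * B)"
    by (rule det_four_block_mat_schur) (use B w in \<open>auto intro!: eq_matI\<close>)
  also have "transpose_mat B * ((1/w) \<cdot>\<^sub>m 1\<^sub>m n) * B = (1/w) \<cdot>\<^sub>m (transpose_mat B * B)"
    using B by (simp add: mat_algebra_dims)
  also have "0\<^sub>m k k - (1/w) \<cdot>\<^sub>m (transpose_mat B * B) = (-1/w) \<cdot>\<^sub>m (transpose_mat B * B)"
    using B by (intro eq_matI) (simp_all del: index_mult_mat add: index_mult_mat(2,3))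
  finally show ?thesis using B by simp
qed

lemma saddle_mat_inverse:
  fixes B Gi :: "real mat"
  assumes B: "B \<in> carrier_mat n k" and Gi: "Gi \<in> carrier_mat k k"
    and inv: "Gi * (transpose_mat B * B) = 1\<^sub>m k" and w: "w \<noteq> 0"
  shows "four_block_mat ((1/w) \<cdot>\<^sub>m (1\<^sub>m n - B * (Gi * transpose_mat B))) (B * Gi)
           (Gi * transpose_mat B) ((-w) \<cdot>\<^sub>m Gi)
         * four_block_mat (w \<cdot>\<^sub>m 1\<^sub>m n) B (transpose_mat B) (0\<^sub>m k k) = 1\<^sub>m (n+k)"
proof -
  define Bt where "Bt = transpose_mat B"
  define Q where "Q = 1\<^sub>m n - B * (Gi * Bt)"
  have Bt: "Bt \<in> carrier_mat k n" and Q: "Q \<in> carrier_mat n n"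
    unfolding Bt_def Q_def using B Gi by auto
  have dims: "dim_row B = n" "dim_col B = k" "dim_row Bt = k" "dim_col Bt = n"
    "dim_row Gi = k" "dim_col Gi = k" "dim_row Q = n" "dim_col Q = n"
    using B Bt Gi Q by auto
  have QB: "Q * B = 0\<^sub>m n k"
  proof -
    have "Q * B = B - B * (Gi * (Bt * B))" unfolding Q_def using dims by (simp add: mat_algebra_dims)
    then show ?thesis using inv B unfolding Bt_def by simp
  qed
  have "four_block_mat ((1/w) \<cdot>\<^sub>m Q) (B * Gi) (Gi * Bt) ((-w) \<cdot>\<^sub>m Gi)
      * four_block_mat (w \<cdot>\<^sub>m 1\<^sub>m n) B Bt (0\<^sub>m k k)
    = four_block_mat ((1/w) \<cdot>\<^sub>m Q * (w \<cdot>\<^sub>m 1\<^sub>m n) + B * Gi * Bt) ((1/w) \<cdot>\<^sub>m Q * B + B * Gi * 0\<^sub>m k k)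
        (Gi * Bt * (w \<cdot>\<^sub>m 1\<^sub>m n) + (-w) \<cdot>\<^sub>m Gi * Bt) (Gi * Bt * B + (-w) \<cdot>\<^sub>m Gi * 0\<^sub>m k k)"
    by (rule mult_four_block_mat) (use Q B Gi Bt in auto)
  also have "\<dots> = four_block_mat (1\<^sub>m n) (0\<^sub>m n k) (0\<^sub>m k n) (1\<^sub>m k)"
  proof -
    have "(1/w) \<cdot>\<^sub>m Q * (w \<cdot>\<^sub>m 1\<^sub>m n) + B * Gi * Bt = w \<cdot>\<^sub>m ((1/w) \<cdot>\<^sub>m Q) + B * (Gi * Bt)"
      using dims by (simp add: mat_algebra_dims)
    also have "\<dots> = 1\<^sub>m n" unfolding Q_def using dims w
      by (intro eq_matI) (simp_all del: index_mult_mat add: index_mult_mat(2,3))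
    finally have 1: "(1/w) \<cdot>\<^sub>m Q * (w \<cdot>\<^sub>m 1\<^sub>m n) + B * Gi * Bt = 1\<^sub>m n" .
    have "(1/w) \<cdot>\<^sub>m Q * B = (1/w) \<cdot>\<^sub>m (Q * B)" using dims by (simp add: mat_algebra_dims)
    then have 2: "(1/w) \<cdot>\<^sub>m Q * B + B * Gi * 0\<^sub>m k k = 0\<^sub>m n k" unfolding QB using dims by simp
    have "Gi * Bt * (w \<cdot>\<^sub>m 1\<^sub>m n) + (-w) \<cdot>\<^sub>m Gi * Bt = w \<cdot>\<^sub>m (Gi * Bt) + (-w) \<cdot>\<^sub>m (Gi * Bt)"
      using dims by (simp add: mat_algebra_dims)
    also have "\<dots> = 0\<^sub>m k n"
      using dims by (intro eq_matI) (simp_all del: index_mult_mat add: index_mult_mat(2,3))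
    finally have 3: "Gi * Bt * (w \<cdot>\<^sub>m 1\<^sub>m n) + (-w) \<cdot>\<^sub>m Gi * Bt = 0\<^sub>m k n" .
    have "Gi * Bt * B = Gi * (Bt * B)" using dims by (simp add: mat_algebra_dims)
    then have 4: "Gi * Bt * B + (-w) \<cdot>\<^sub>m Gi * 0\<^sub>m k k = 1\<^sub>m k" using inv dims unfolding Bt_def by simp
    show ?thesis unfolding 1 2 3 4 ..
  qed
  finally show ?thesis unfolding Q_def Bt_def by simp
qed

text \<open>Schur complement of the saddle-point block \<open>[w I, B\<^sub>S; B\<^sub>S\<^sup>T, 0]\<close> of \<open>H_minor\<close>:
  it replaces \<open>A\<^sup>T A\<close> by \<open>A\<^sup>T Q\<^sub>S A\<close>.\<close>

lemma det_H_minor_eliminate_cols: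
  fixes A BS CR Gi :: "real mat"
  assumes A: "A \<in> carrier_mat n d" and BS: "BS \<in> carrier_mat n k" and CR: "CR \<in> carrier_mat r d"
    and w: "w \<noteq> 0" and Gi: "Gi \<in> carrier_mat k k" and inv: "Gi * (transpose_mat BS * BS) = 1\<^sub>m k"
  shows "det (H_minor x w A BS CR) = w^n * (-1/w)^k * det (transpose_mat BS * BS) *
    det (four_block_mat (0\<^sub>m r r) CR (transpose_mat CR)
      (x \<cdot>\<^sub>m 1\<^sub>m d - (1/w) \<cdot>\<^sub>m (transpose_mat A * ((1\<^sub>m n - BS * (Gi * transpose_mat BS)) * A))))"
proof -
  define Q where "Q = 1\<^sub>m n - BS * (Gi * transpose_mat BS)"
  define T where "T = four_block_mat (w \<cdot>\<^sub>m 1\<^sub>m n) BS (transpose_mat BS) (0\<^sub>m k k)"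
  define Ti where "Ti = four_block_mat ((1/w) \<cdot>\<^sub>m Q) (BS * Gi) (Gi * transpose_mat BS) ((-w) \<cdot>\<^sub>m Gi)"
  define E where "E = four_block_mat (0\<^sub>m n r) A (0\<^sub>m k r) (0\<^sub>m k d)"
  define Et where "Et = four_block_mat (0\<^sub>m r n) (0\<^sub>m r k) (transpose_mat A) (0\<^sub>m d k)"
  define D where "D = four_block_mat (0\<^sub>m r r) CR (transpose_mat CR) (x \<cdot>\<^sub>m 1\<^sub>m d)"
  have Q: "Q \<in> carrier_mat n n" unfolding Q_def using BS Gi by auto
  have carriers: "T \<in> carrier_mat (n+k) (n+k)" "Ti \<in> carrier_mat (n+k) (n+k)"
    "E \<in> carrier_mat (n+k) (r+d)" "Et \<in> carrier_mat (r+d) (n+k)" "D \<in> carrier_mat (r+d) (r+d)"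
    unfolding T_def Ti_def E_def Et_def D_def using A BS CR Gi Q by auto
  have dims: "dim_row A = n" "dim_col A = d" "dim_row BS = n" "dim_col BS = k" "dim_row CR = r"
    "dim_col CR = d" "dim_row Gi = k" "dim_col Gi = k" "dim_row Q = n" "dim_col Q = n"
    using A BS CR Gi Q by auto
  have "H_minor x w A BS CR = four_block_mat T E Et D"
    unfolding H_minor_def Let_def T_def E_def Et_def D_def using dims by simp
  then have "det (H_minor x w A BS CR) = det T * det (D - Et * Ti * E)"
    using det_four_block_mat_schur[OF carriers(1,3,4,5,2)] saddle_mat_inverse[OF BS Gi inv w]
    unfolding Ti_def T_def Q_def by simp
  also have "Et * Ti = four_block_mat (0\<^sub>m r n) (0\<^sub>m r k)
      ((1/w) \<cdot>\<^sub>m (transpose_mat A * Q)) (transpose_mat A * (BS * Gi))"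
  proof -
    have "Et * Ti = four_block_mat (0\<^sub>m r n * ((1/w) \<cdot>\<^sub>m Q) + 0\<^sub>m r k * (Gi * transpose_mat BS))
        (0\<^sub>m r n * (BS * Gi) + 0\<^sub>m r k * ((-w) \<cdot>\<^sub>m Gi))
        (transpose_mat A * ((1/w) \<cdot>\<^sub>m Q) + 0\<^sub>m d k * (Gi * transpose_mat BS))
        (transpose_mat A * (BS * Gi) + 0\<^sub>m d k * ((-w) \<cdot>\<^sub>m Gi))"
      unfolding Et_def Ti_def by (rule mult_four_block_mat) (use A BS Gi Q in auto)
    then show ?thesis using dims by (simp add: mat_algebra_dims)
  qed
  also have "\<dots> * E = four_block_mat (0\<^sub>m r r) (0\<^sub>m r d) (0\<^sub>m d r)
      ((1/w) \<cdot>\<^sub>m (transpose_mat A * (Q * A)))"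
  proof -
    have "four_block_mat (0\<^sub>m r n) (0\<^sub>m r k) ((1/w) \<cdot>\<^sub>m (transpose_mat A * Q)) (transpose_mat A * (BS * Gi)) * E
      = four_block_mat (0\<^sub>m r n * 0\<^sub>m n r + 0\<^sub>m r k * 0\<^sub>m k r) (0\<^sub>m r n * A + 0\<^sub>m r k * 0\<^sub>m k d)
          ((1/w) \<cdot>\<^sub>m (transpose_mat A * Q) * 0\<^sub>m n r + transpose_mat A * (BS * Gi) * 0\<^sub>m k r)
          ((1/w) \<cdot>\<^sub>m (transpose_mat A * Q) * A + transpose_mat A * (BS * Gi) * 0\<^sub>m k d)"
      unfolding E_def by (rule mult_four_block_mat) (use A BS Gi Q in auto)
    then show ?thesis using dims by (simp add: mat_algebra_dims)
  qed
  also have "D - \<dots> = four_block_mat (0\<^sub>m r r) CR (transpose_mat CR)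
      (x \<cdot>\<^sub>m 1\<^sub>m d - (1/w) \<cdot>\<^sub>m (transpose_mat A * (Q * A)))"
    unfolding D_def using CR A Q dims
    by (intro eq_matI) (simp_all del: index_mult_mat add: index_mult_mat(2,3))
  finally show ?thesis
    unfolding T_def det_saddle_mat[OF BS w] Q_def by (simp add: algebra_simps)
qed

context
  fixes C G P :: "real mat" and r d :: nat
  assumes C: "C \<in> carrier_mat r d" and G: "G \<in> carrier_mat r r"
    and inv: "C * transpose_mat C * G = 1\<^sub>m r" "G * (C * transpose_mat C) = 1\<^sub>m r"
    and P_def: "P = 1\<^sub>m d - transpose_mat C * (G * C)"
begin

private lemma dims:
  "dim_row C = r" "dim_col C = d" "dim_row (transpose_mat C) = d" "dim_col (transpose_mat C) = r"
  "dim_row G = r" "dim_col G = r" "dim_row P = d" "dim_col P = d"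
  using C G unfolding P_def by auto

lemma gram_proj_carrier: "P \<in> carrier_mat d d"
  unfolding P_def using C G by auto

lemma mult_transpose_gram_inverse: "C * (transpose_mat C * G) = 1\<^sub>m r"
  using inv(1) dims by (simp add: mat_algebra_dims)

lemma gram_proj_mult_transpose: "P * transpose_mat C = 0\<^sub>m d r"
proof -
  have "P * transpose_mat C = transpose_mat C - transpose_mat C * (G * (C * transpose_mat C))"
    unfolding P_def using dims by (simp add: mat_algebra_dims)
  then show ?thesis using inv(2) C by simp
qed

lemma mult_gram_proj: "C * P = 0\<^sub>m r d"
proof -
  have "C * P = C - (C * (transpose_mat C * G)) * C"
    unfolding P_def using dims by (simp add: mat_algebra_dims)
  then show ?thesis using mult_transpose_gram_inverse C by simp
qed

lemma gram_proj_symmetric: "transpose_mat P = P"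
proof -
  have "transpose_mat G = G"
    by (rule symmetric_inverse_mat[OF _ G _ inv(1)]) (use C in \<open>auto simp: mat_algebra_dims\<close>)
  then show ?thesis
    unfolding P_def using C G dims
    by (simp add: transpose_minus[of _ d d] mat_algebra_dims)
qed

lemma gram_proj_idem: "P * P = P"
proof -
  have "P * P = P - transpose_mat C * (G * (C * P))"
    unfolding P_def using dims by (simp add: mat_algebra_dims)
  then show ?thesis using mult_gram_proj gram_proj_carrier C G by simp
qed

text \<open>Unit triangular row and column operations project the lower right block of the bordered
  matrix onto \<open>ker C\<close>.\<close>

lemma det_border_proj:
  assumes Y: "Y \<in> carrier_mat d d"
  shows "det (four_block_mat (0\<^sub>m r r) C (transpose_mat C) Y)
       = det (four_block_mat (0\<^sub>m r r) C (transpose_mat C) (P * (Y * P)))"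
proof -
  let ?N = "four_block_mat (0\<^sub>m r r) C (transpose_mat C) Y"
  define U where "U = four_block_mat (1\<^sub>m r) (- (G * (C * Y))) (0\<^sub>m d r) (1\<^sub>m d)"
  define L where "L = four_block_mat (1\<^sub>m r) (0\<^sub>m r d) (- (P * (Y * (transpose_mat C * G)))) (1\<^sub>m d)"
  have carriers: "?N \<in> carrier_mat (r+d) (r+d)" "U \<in> carrier_mat (r+d) (r+d)" "L \<in> carrier_mat (r+d) (r+d)"
    unfolding U_def L_def using C G Y gram_proj_carrier by auto
  have dY: "dim_row Y = d" "dim_col Y = d" using Y by auto
  have "?N * U = four_block_mat (0\<^sub>m r r * 1\<^sub>m r + C * 0\<^sub>m d r) (0\<^sub>m r r * (- (G * (C * Y))) + C * 1\<^sub>m d)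
        (transpose_mat C * 1\<^sub>m r + Y * 0\<^sub>m d r) (transpose_mat C * (- (G * (C * Y))) + Y * 1\<^sub>m d)"
    unfolding U_def by (rule mult_four_block_mat) (use C G Y in auto)
  also have "transpose_mat C * (- (G * (C * Y))) + Y * 1\<^sub>m d = P * Y"
  proof -
    have "P * Y = Y - transpose_mat C * (G * (C * Y))"
      unfolding P_def using dims dY by (simp add: mat_algebra_dims)
    then show ?thesis using C G Y by (intro eq_matI) (simp_all del: index_mult_mat add: index_mult_mat(2,3))
  qed
  finally have NU: "?N * U = four_block_mat (0\<^sub>m r r) C (transpose_mat C) (P * Y)"
    using dims dY by simp
  have "L * (?N * U) = four_block_mat (1\<^sub>m r * 0\<^sub>m r r + 0\<^sub>m r d * transpose_mat C) (1\<^sub>m r * C + 0\<^sub>m r d * (P * Y))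
        ((- (P * (Y * (transpose_mat C * G)))) * 0\<^sub>m r r + 1\<^sub>m d * transpose_mat C)
        ((- (P * (Y * (transpose_mat C * G)))) * C + 1\<^sub>m d * (P * Y))"
    unfolding NU L_def by (rule mult_four_block_mat) (use C G Y gram_proj_carrier in auto)
  also have "(- (P * (Y * (transpose_mat C * G)))) * C + 1\<^sub>m d * (P * Y) = P * (Y * P)"
  proof -
    have "(- (P * (Y * (transpose_mat C * G)))) * C = - (P * (Y * (transpose_mat C * (G * C))))"
      using dims dY by (simp add: mat_algebra_dims)
    moreover have "P * (Y * P) = P * Y - P * (Y * (transpose_mat C * (G * C)))"
      unfolding P_def using dims dY by (simp add: mat_algebra_dims)
    ultimately show ?thesis using C G Y gram_proj_carrier
      by (intro eq_matI) (simp_all del: index_mult_mat add: index_mult_mat(2,3))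
  qed
  finally have LNU: "L * (?N * U) = four_block_mat (0\<^sub>m r r) C (transpose_mat C) (P * (Y * P))"
    using dims dY by simp
  have "det L = 1" unfolding L_def
    by (subst det_four_block_mat_upper_right_zero[of _ r _ d]) (use C G Y gram_proj_carrier in auto)
  moreover have "det U = 1" unfolding U_def
    by (subst det_four_block_mat_lower_left_zero[of _ r _ d]) (use C G Y in auto)
  ultimately show ?thesis
    using det_mult[OF carriers(3) mult_carrier_mat[OF carriers(1,2)]] det_mult[OF carriers(1,2)]
    unfolding LNU by simp
qed

lemma det_unborder_factor:
  "det (four_block_mat ((1-x) \<cdot>\<^sub>m G) (G * C) (transpose_mat C * G) (1\<^sub>m d)) = (-x)^r * det G"
proof -
  let ?W = "four_block_mat ((1-x) \<cdot>\<^sub>m G) (G * C) (transpose_mat C * G) (1\<^sub>m d)"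
  have "?W = four_block_mat ((-x) \<cdot>\<^sub>m G) (G * C) (0\<^sub>m d r) (1\<^sub>m d)
      * four_block_mat (1\<^sub>m r) (0\<^sub>m r d) (transpose_mat C * G) (1\<^sub>m d)"
  proof -
    have "four_block_mat ((-x) \<cdot>\<^sub>m G) (G * C) (0\<^sub>m d r) (1\<^sub>m d)
        * four_block_mat (1\<^sub>m r) (0\<^sub>m r d) (transpose_mat C * G) (1\<^sub>m d)
      = four_block_mat ((-x) \<cdot>\<^sub>m G * 1\<^sub>m r + G * C * (transpose_mat C * G))
          ((-x) \<cdot>\<^sub>m G * 0\<^sub>m r d + G * C * 1\<^sub>m d)
          (0\<^sub>m d r * 1\<^sub>m r + 1\<^sub>m d * (transpose_mat C * G)) (0\<^sub>m d r * 0\<^sub>m r d + 1\<^sub>m d * 1\<^sub>m d)"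
      by (rule mult_four_block_mat) (use C G in auto)
    moreover have "G * C * (transpose_mat C * G) = G"
      using mult_transpose_gram_inverse dims G by (simp add: mat_algebra_dims)
    moreover have "(-x) \<cdot>\<^sub>m G * 1\<^sub>m r + G = (1-x) \<cdot>\<^sub>m G"
      using G by (intro eq_matI) (auto simp: algebra_simps)
    ultimately show ?thesis using dims C G by simp
  qed
  then have "det ?W = det (four_block_mat ((-x) \<cdot>\<^sub>m G) (G * C) (0\<^sub>m d r) (1\<^sub>m d))
      * det (four_block_mat (1\<^sub>m r) (0\<^sub>m r d) (transpose_mat C * G) (1\<^sub>m d))"
    by (simp only:) (rule det_mult[of _ "r+d"], use C G in auto)
  also have "det (four_block_mat ((-x) \<cdot>\<^sub>m G) (G * C) (0\<^sub>m d r) (1\<^sub>m d)) = det ((-x) \<cdot>\<^sub>m G)"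
    by (subst det_four_block_mat_lower_left_zero[of _ r _ d]) (use C G in auto)
  also have "det (four_block_mat (1\<^sub>m r) (0\<^sub>m r d) (transpose_mat C * G) (1\<^sub>m d)) = 1"
    by (subst det_four_block_mat_upper_right_zero[of _ r _ d]) (use C G in auto)
  finally show ?thesis using G by simp
qed

text \<open>Once the lower right block vanishes on \<open>range C\<^sup>T\<close>, the border can be traded for the
  term \<open>x C\<^sup>T G C\<close>; the factor \<open>W\<close> is chosen so that the product has an identity upper left block.\<close>

lemma det_border_proj_unborder:
  assumes Y: "Y \<in> carrier_mat d d"
  shows "(-x)^r * det G * det (four_block_mat (0\<^sub>m r r) C (transpose_mat C) (P * (Y * P)))
       = det (P * (Y * P) + x \<cdot>\<^sub>m (transpose_mat C * (G * C)))"
proof -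
  let ?X = "four_block_mat (0\<^sub>m r r) C (transpose_mat C) (P * (Y * P))"
  let ?Hc = "transpose_mat C * (G * C)"
  define W where "W = four_block_mat ((1-x) \<cdot>\<^sub>m G) (G * C) (transpose_mat C * G) (1\<^sub>m d)"
  have PYP: "P * (Y * P) \<in> carrier_mat d d" using Y gram_proj_carrier by auto
  have carriers: "?X \<in> carrier_mat (r+d) (r+d)" "W \<in> carrier_mat (r+d) (r+d)"
    unfolding W_def using C G PYP by auto
  have "?X * W = four_block_mat (0\<^sub>m r r * ((1-x) \<cdot>\<^sub>m G) + C * (transpose_mat C * G))
      (0\<^sub>m r r * (G * C) + C * 1\<^sub>m d)
      (transpose_mat C * ((1-x) \<cdot>\<^sub>m G) + P * (Y * P) * (transpose_mat C * G))
      (transpose_mat C * (G * C) + P * (Y * P) * 1\<^sub>m d)"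
    unfolding W_def by (rule mult_four_block_mat) (use C G PYP in auto)
  also have "\<dots> = four_block_mat (1\<^sub>m r) C ((1-x) \<cdot>\<^sub>m (transpose_mat C * G)) (?Hc + P * (Y * P))"
  proof -
    have "P * (Y * P) * (transpose_mat C * G) = P * (Y * ((P * transpose_mat C) * G))"
      using dims Y by (simp add: mat_algebra_dims)
    then have "P * (Y * P) * (transpose_mat C * G) = 0\<^sub>m d r"
      unfolding gram_proj_mult_transpose using dims Y by simp
    moreover have "transpose_mat C * ((1-x) \<cdot>\<^sub>m G) = (1-x) \<cdot>\<^sub>m (transpose_mat C * G)"
      using dims by (simp add: mat_algebra_dims)
    ultimately show ?thesis using mult_transpose_gram_inverse dims C G PYP by simp
  qed
  finally have XW: "?X * W = \<dots>" .
  have "det (?X * W) = det (1\<^sub>m r) * det (?Hc + P * (Y * P) - (1-x) \<cdot>\<^sub>m (transpose_mat C * G) * 1\<^sub>m r * C)"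
    unfolding XW by (rule det_four_block_mat_schur) (use C G PYP in auto)
  also have "?Hc + P * (Y * P) - (1-x) \<cdot>\<^sub>m (transpose_mat C * G) * 1\<^sub>m r * C = P * (Y * P) + x \<cdot>\<^sub>m ?Hc"
  proof -
    have "(1-x) \<cdot>\<^sub>m (transpose_mat C * G) * 1\<^sub>m r * C = (1-x) \<cdot>\<^sub>m ?Hc"
      using dims by (simp add: mat_algebra_dims)
    then show ?thesis using C G PYP dims
      by (intro eq_matI) (simp_all del: index_mult_mat add: index_mult_mat(2,3) algebra_simps)
  qed
  finally have "det ?X * det W = det (P * (Y * P) + x \<cdot>\<^sub>m ?Hc)"
    using det_mult[OF carriers] by simp
  with det_unborder_factor show ?thesis by (simp add: W_def ac_simps)
qed

end

lemma det_gram_proj_eq_det_border: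
  fixes C G K :: "real mat"
  assumes C: "C \<in> carrier_mat r d" and K: "K \<in> carrier_mat d d" and w: "w \<noteq> 0"
    and G: "G \<in> carrier_mat r r" and inv: "C * transpose_mat C * G = 1\<^sub>m r" "G * (C * transpose_mat C) = 1\<^sub>m r"
  shows "det (C * transpose_mat C) * det ((x*w) \<cdot>\<^sub>m 1\<^sub>m d - (1\<^sub>m d - transpose_mat C * (G * C)) * (K * (1\<^sub>m d - transpose_mat C * (G * C))))
       = (-x)^r * w^d * det (four_block_mat (0\<^sub>m r r) C (transpose_mat C) (x \<cdot>\<^sub>m 1\<^sub>m d - (1/w) \<cdot>\<^sub>m K))"
proof -
  define P where "P = 1\<^sub>m d - transpose_mat C * (G * C)"
  define Y where "Y = x \<cdot>\<^sub>m 1\<^sub>m d - (1/w) \<cdot>\<^sub>m K"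
  note proj = gram_proj_carrier[OF C G inv P_def] gram_proj_idem[OF C G inv P_def]
  have Y: "Y \<in> carrier_mat d d" unfolding Y_def using K by auto
  have "P * (Y * P) = x \<cdot>\<^sub>m (P * P) - (1/w) \<cdot>\<^sub>m (P * (K * P))"
    unfolding Y_def using proj K by (simp add: mat_algebra_dims)
  then have "P * (Y * P) + x \<cdot>\<^sub>m (transpose_mat C * (G * C)) = (1/w) \<cdot>\<^sub>m ((x*w) \<cdot>\<^sub>m 1\<^sub>m d - P * (K * P))"
    unfolding proj(2) using proj K C G w unfolding P_def
    by (intro eq_matI) (simp_all del: index_mult_mat add: index_mult_mat(2,3) field_simps)
  then have border: "(-x)^r * det G * det (four_block_mat (0\<^sub>m r r) C (transpose_mat C) Y)
      = (1/w)^d * det ((x*w) \<cdot>\<^sub>m 1\<^sub>m d - P * (K * P))"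
    using det_border_proj[OF C G inv P_def Y] det_border_proj_unborder[OF C G inv P_def Y] K
      carrier_matD[OF proj(1)] by simp
  have gram: "det (C * transpose_mat C) * det G = 1"
    using det_mult[of "C * transpose_mat C" r G] inv C G by simp
  have "det (C * transpose_mat C) * det ((x*w) \<cdot>\<^sub>m 1\<^sub>m d - P * (K * P))
      = det (C * transpose_mat C) * (w^d * ((1/w)^d * det ((x*w) \<cdot>\<^sub>m 1\<^sub>m d - P * (K * P))))"
    using w by (simp add: power_one_over)
  also have "\<dots> = (det (C * transpose_mat C) * det G)
      * ((-x)^r * w^d * det (four_block_mat (0\<^sub>m r r) C (transpose_mat C) Y))"
    unfolding border[symmetric] by (simp only: ac_simps)
  finally show ?thesis unfolding gram P_def Y_def by simp
qed

lemma gram_of_projected_mat: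
  fixes A Q P :: "real mat"
  assumes A: "A \<in> carrier_mat n d" and Q: "Q \<in> carrier_mat n n" and P: "P \<in> carrier_mat d d"
    and Q_sym: "transpose_mat Q = Q" and Q_idem: "Q * Q = Q" and P_sym: "transpose_mat P = P"
  shows "transpose_mat (Q * A * P) * (Q * A * P) = P * ((transpose_mat A * (Q * A)) * P)"
proof -
  have "transpose_mat (Q * A * P) * (Q * A * P) = P * (transpose_mat A * ((Q * Q) * (A * P)))"
    using A Q P Q_sym P_sym by (simp add: mat_algebra_dims)
  also have "\<dots> = P * (transpose_mat A * (Q * (A * P)))" by (simp only: Q_idem)
  also have "\<dots> = P * ((transpose_mat A * (Q * A)) * P)" using A Q P by (simp add: mat_algebra_dims)
  finally show ?thesis .
qed

lemma power_int_saddle_factor: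
  fixes w :: real
  assumes "w \<noteq> 0"
  shows "w powi (int d + int k - int n) * w^n * (-1/w)^k = (-1)^k * w^d"
proof -
  have "w powi (int d + int k - int n) = w powi (int (d+k)) / w powi (int n)"
    using assms by (simp add: power_int_diff)
  then have "w powi (int d + int k - int n) = w^(d+k) / w^n"
    by (simp only: power_int_of_nat)
  then have "w powi (int d + int k - int n) * w^n = w^d * w^k"
    using assms by (simp add: power_add)
  moreover have "w^k * (-1/w)^k = (-1)^k"
    using assms by (simp flip: power_mult_distrib)
  ultimately show ?thesis by (simp add: mult.assoc)
qed

text \<open>If one of the Gram matrices is singular, both sides vanish.\<close>

lemma det_gram_proj_eq_det_H_minor:
  fixes A BS CR :: "real mat"
  assumes A: "A \<in> carrier_mat n d" and BS: "BS \<in> carrier_mat n k" and CR: "CR \<in> carrier_mat r d"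
    and w: "w \<noteq> 0"
  shows "det (CR * transpose_mat CR) * det (transpose_mat BS * BS) *
      det ((x*w) \<cdot>\<^sub>m 1\<^sub>m d - transpose_mat ((1\<^sub>m n - BS * pinv BS) * A * (1\<^sub>m d - pinv CR * CR))
              * ((1\<^sub>m n - BS * pinv BS) * A * (1\<^sub>m d - pinv CR * CR)))
    = (-1)^(k+r) * x^r * w powi (int d + int k - int n) * det (H_minor x w A BS CR)"
proof (cases "det (transpose_mat BS * BS) = 0 \<or> det (CR * transpose_mat CR) = 0")
  case True
  then show ?thesis
    using det_H_minor_singular_col_gram[OF A BS CR] det_H_minor_singular_row_gram[OF A BS CR] by auto
next
  case False
  obtain Gi where Gi: "Gi \<in> carrier_mat k k" "transpose_mat BS * BS * Gi = 1\<^sub>m k"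
      "Gi * (transpose_mat BS * BS) = 1\<^sub>m k"
    using det_neq_0_obtains_inverse[of "transpose_mat BS * BS" k] BS False by auto
  obtain Gci where Gci: "Gci \<in> carrier_mat r r" "CR * transpose_mat CR * Gci = 1\<^sub>m r"
      "Gci * (CR * transpose_mat CR) = 1\<^sub>m r"
    using det_neq_0_obtains_inverse[of "CR * transpose_mat CR" r] CR False by auto
  define Q where "Q = 1\<^sub>m n - BS * (Gi * transpose_mat BS)"
  define P where "P = 1\<^sub>m d - transpose_mat CR * (Gci * CR)"
  have BSt: "transpose_mat BS \<in> carrier_mat k n" using BS by simp
  have Q_def': "Q = 1\<^sub>m n - transpose_mat (transpose_mat BS) * (Gi * transpose_mat BS)"
    unfolding Q_def by simp
  have Gi': "transpose_mat BS * transpose_mat (transpose_mat BS) * Gi = 1\<^sub>m k"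
      "Gi * (transpose_mat BS * transpose_mat (transpose_mat BS)) = 1\<^sub>m k"
    using Gi by simp_all
  have Q: "transpose_mat Q = Q" "Q * Q = Q" "Q \<in> carrier_mat n n"
    using gram_proj_symmetric[OF BSt Gi(1) Gi' Q_def'] gram_proj_idem[OF BSt Gi(1) Gi' Q_def']
      gram_proj_carrier[OF BSt Gi(1) Gi' Q_def'] .
  have P: "transpose_mat P = P" "P \<in> carrier_mat d d"
    using gram_proj_symmetric[OF CR Gci P_def] gram_proj_carrier[OF CR Gci P_def] .
  have pinv_B: "1\<^sub>m n - BS * pinv BS = Q"
    unfolding Q_def pinv_full_col_rank[OF BS Gi] using BS Gi by (simp add: mat_algebra_dims)
  have pinv_C: "1\<^sub>m d - pinv CR * CR = P"
    unfolding P_def pinv_full_row_rank[OF CR Gci] using CR Gci by (simp add: mat_algebra_dims)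
  have proj_gram: "transpose_mat (Q * A * P) * (Q * A * P) = P * ((transpose_mat A * (Q * A)) * P)"
    by (rule gram_of_projected_mat[OF A Q(3) P(2) Q(1,2) P(1)])
  have rows: "det (CR * transpose_mat CR) * det ((x*w) \<cdot>\<^sub>m 1\<^sub>m d - P * ((transpose_mat A * (Q * A)) * P))
      = (-x)^r * w^d * det (four_block_mat (0\<^sub>m r r) CR (transpose_mat CR)
          (x \<cdot>\<^sub>m 1\<^sub>m d - (1/w) \<cdot>\<^sub>m (transpose_mat A * (Q * A))))"
    using det_gram_proj_eq_det_border[OF CR _ w Gci] A Q unfolding P_def by simp
  have cols: "det (H_minor x w A BS CR) = w^n * (-1/w)^k * det (transpose_mat BS * BS)
      * det (four_block_mat (0\<^sub>m r r) CR (transpose_mat CR)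
          (x \<cdot>\<^sub>m 1\<^sub>m d - (1/w) \<cdot>\<^sub>m (transpose_mat A * (Q * A))))"
    unfolding Q_def by (rule det_H_minor_eliminate_cols[OF A BS CR w Gi(1,3)])
  have regroup: "a * b * p = (-1)^(k+r) * x^r * W * M"
    if s3: "a * p = (-x)^r * w^d * F" and s12: "M = w^n * (-1/w)^k * b * F"
      and W: "W = w powi (int d + int k - int n)" for a b p F M W :: real
  proof -
    have "(-1)^(k+r) * x^r * W * M = (-1)^(k+r) * x^r * (W * w^n * (-1/w)^k) * b * F"
      unfolding s12 by (simp only: mult.assoc)
    also have "\<dots> = ((-1)^(k+r) * (-1)^k) * x^r * w^d * b * F"
      unfolding W power_int_saddle_factor[OF w] by (simp only: ac_simps)
    also have "(-1::real)^(k+r) * (-1)^k = (-1)^r"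
      by (simp add: power_add flip: mult.assoc power2_eq_square power_mult)
    also have "(-1)^r * x^r * w^d * b * F = b * ((-x)^r * w^d * F)"
      by (simp only: power_minus[of x r] ac_simps)
    finally show ?thesis unfolding s3[symmetric] by (simp only: ac_simps)
  qed
  show ?thesis
    unfolding pinv_B pinv_C proj_gram by (rule regroup[OF rows cols refl])
qed

theorem proposition3p2:
  fixes A B C :: "real mat" and n d dB nC k r :: nat and S R :: "nat set" and x w :: real
  assumes "A \<in> carrier_mat n d" and "B \<in> carrier_mat n dB" and "C \<in> carrier_mat nC d"
    and "k \<le> vec_space.rank n B" and "r \<le> vec_space.rank nC C"
    and "S \<subseteq> {0..<dB}" and "card S = k" and "R \<subseteq> {0..<nC}" and "card R = r"
    and "w \<noteq> 0"
  shows "det (rows_sub C R * transpose_mat (rows_sub C R))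
         * det (transpose_mat (cols_sub B S) * cols_sub B S)
         * pSR S R (x * w) A B C
       = (-1) ^ (k + r) * x ^ r * w powi (int d + int k - int n)
         * pderivs (map Inl (sorted_list_of_set ({0..<dB} - S))
                    @ map Inr (sorted_list_of_set ({0..<nC} - R)))
                   (Hvar x w A B C) (\<lambda>_. 0)"
proof -
  note A = assms(1) and B = assms(2) and C = assms(3) and S = assms(6,7) and R = assms(8,9)
  have BS: "cols_sub B S \<in> carrier_mat n k" using cols_sub_carrier[OF B S(1)] S(2) by simp
  have CR: "rows_sub C R \<in> carrier_mat r d" using rows_sub_carrier[OF C R(1)] R(2) by simp
  have "pderivs (map Inl (sorted_list_of_set ({0..<dB} - S)) @ map Inr (sorted_list_of_set ({0..<nC} - R)))
          (Hvar x w A B C) (\<lambda>_. 0) = det (H_minor x w A (cols_sub B S) (rows_sub C R))"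
    using pderivs_Hvar[OF A B C, of S R x w "\<lambda>_. 0"] det_H_mat_unit_rows_cols[OF A B C S R] by simp
  moreover have "pSR S R (x * w) A B C =
      det ((x*w) \<cdot>\<^sub>m 1\<^sub>m d
        - transpose_mat ((1\<^sub>m n - cols_sub B S * pinv (cols_sub B S)) * A
                         * (1\<^sub>m d - pinv (rows_sub C R) * rows_sub C R))
        * ((1\<^sub>m n - cols_sub B S * pinv (cols_sub B S)) * A
           * (1\<^sub>m d - pinv (rows_sub C R) * rows_sub C R)))"
    using A B C unfolding pSR_def Qmat_def Pmat_def Let_def by simp
  ultimately show ?thesis
    using det_gram_proj_eq_det_H_minor[OF A BS CR assms(10), of x] by (simp add: mult.assoc)
qed

end
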